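(* Let $F$ be an infinite field, $G$ a group with identity $e$, and $(g_1,\dots,g_n)\in G^n$ with pairwise distinct entries. Give $A=M_n(F)$ the elementary $G$-grading induced by $(g_1,\dots,g_n)$, and let $B$ be a subalgebra of $M_n(F)$ spanned by a set of matrix units, with the induced $G$-grading $B_g=B\cap A_g$. Let $G_0=\{g\in G: B_g\neq 0\}$. Then the $T_G$-ideal $T_G(B)$ of graded polynomial identities of $B$ is generated by the following polynomials: (i) $x_{e}^{(1)}x_{e}^{(2)}-x_{e}^{(2)}x_{e}^{(1)}$, if $e\in G_0$; (ii) $x_{g}^{(1)}x_{g^{-1}}^{(2)}x_{g}^{(3)}-x_{g}^{(3)}x_{g^{-1}}^{(2)}x_{g}^{(1)}$, for every $g\neq e$ with $B_g\neq 0$; (iii) $x_{g}^{(1)}$, for every $g$ with $B_g=0$; together with a finite number of monomial graded identities of $B$ of the form $x_{h_1}^{(1)}x_{h_2}^{(2)}\cdots x_{h_p}^{(p)}$ with $h_1,\dots,h_p\in G$ and $2\le p\le 2n-1$.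
   Context: The elementary grading on $A=M_n(F)$ induced by $(g_1,\dots,g_n)$: $A_g$ is the span of the matrix units $e_{ij}$ with $g_i^{-1}g_j=g$. $F\langle X|G\rangle$ is the free associative algebra on $X=\bigcup_{g\in G}X_g$, $X_g=\{x_g^{(1)},x_g^{(2)},\dots\}$ disjoint countable sets, the variable $x_g^{(i)}$ having degree $g$. A polynomial $f(x_{g_1}^{(1)},\dots,x_{g_k}^{(k)})$ is a graded identity of $B$ if $f(b_1,\dots,b_k)=0$ for all $b_j\in B_{g_j}$; $T_G(B)$ is the set of all graded identities, which is a $T_G$-ideal (an ideal invariant under all degree-preserving endomorphisms of $F\langle X|G\rangle$). A set $S$ generates (is a basis of) $T_G(B)$ if $T_G(B)$ is the smallest $T_G$-ideal containing $S$. *)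

theory Defs
  imports "HOL-Algebra.Group"
begin

type_synonym ('f, 'n) sqmat = "'n \<Rightarrow> 'n \<Rightarrow> 'f"

definition mzero :: "('f::field, 'n) sqmat" where
  "mzero = (\<lambda>i j. 0)"

definition mid :: "('f::field, 'n) sqmat" where
  "mid = (\<lambda>i j. if i = j then 1 else 0)"

definition mmul :: "('f::field, 'n::finite) sqmat \<Rightarrow> ('f, 'n) sqmat \<Rightarrow> ('f, 'n) sqmat" where
  "mmul X Y = (\<lambda>i j. \<Sum>k\<in>UNIV. X i k * Y k j)"

fun mprod :: "('f::field, 'n::finite) sqmat list \<Rightarrow> ('f, 'n) sqmat" where
  "mprod [] = mid"
| "mprod (X # Xs) = mmul X (mprod Xs)"

definition elem_comp :: "('g, 'b) monoid_scheme \<Rightarrow> ('n \<Rightarrow> 'g) \<Rightarrow> 'g \<Rightarrow> ('f::field, 'n) sqmat set" where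
  "elem_comp G gs h = {X. \<forall>i j. X i j \<noteq> 0 \<longrightarrow> inv\<^bsub>G\<^esub> (gs i) \<otimes>\<^bsub>G\<^esub> gs j = h}"

definition unit_span :: "('n \<times> 'n) set \<Rightarrow> ('f::field, 'n) sqmat set" where
  "unit_span S = {X. \<forall>i j. X i j \<noteq> 0 \<longrightarrow> (i, j) \<in> S}"

definition is_subalgebra :: "('f::field, 'n::finite) sqmat set \<Rightarrow> bool" where
  "is_subalgebra B \<longleftrightarrow> mzero \<in> B \<and>
     (\<forall>X\<in>B. \<forall>Y\<in>B. (\<lambda>i j. X i j + Y i j) \<in> B) \<and>
     (\<forall>c. \<forall>X\<in>B. (\<lambda>i j. c * X i j) \<in> B) \<and>
     (\<forall>X\<in>B. \<forall>Y\<in>B. mmul X Y \<in> B)"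

text \<open>The variable x_h^(i) is the pair (h, i); a polynomial is a finitely supported
  function from words (lists of variables) to F, vanishing on the empty word,
  all of whose variables have degrees in the carrier of G.\<close>

type_synonym ('g, 'f) gpoly = "('g \<times> nat) list \<Rightarrow> 'f"

definition supp :: "('g, 'f::field) gpoly \<Rightarrow> ('g \<times> nat) list set" where
  "supp p = {w. p w \<noteq> 0}"

definition is_gpoly :: "('g, 'b) monoid_scheme \<Rightarrow> ('g, 'f::field) gpoly \<Rightarrow> bool" where
  "is_gpoly G p \<longleftrightarrow> finite (supp p) \<and> p [] = 0 \<and>
     (\<forall>w\<in>supp p. \<forall>v\<in>set w. fst v \<in> carrier G)"

definition pzero :: "('g, 'f::field) gpoly" where
  "pzero = (\<lambda>w. 0)"

definition padd :: "('g, 'f::field) gpoly \<Rightarrow> ('g, 'f) gpoly \<Rightarrow> ('g, 'f) gpoly" where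
  "padd p q = (\<lambda>w. p w + q w)"

definition psub :: "('g, 'f::field) gpoly \<Rightarrow> ('g, 'f) gpoly \<Rightarrow> ('g, 'f) gpoly" where
  "psub p q = (\<lambda>w. p w - q w)"

definition psmult :: "'f::field \<Rightarrow> ('g, 'f) gpoly \<Rightarrow> ('g, 'f) gpoly" where
  "psmult c p = (\<lambda>w. c * p w)"

definition pmul :: "('g, 'f::field) gpoly \<Rightarrow> ('g, 'f) gpoly \<Rightarrow> ('g, 'f) gpoly" where
  "pmul p q = (\<lambda>w. \<Sum>k\<in>{..length w}. p (take k w) * q (drop k w))"

definition mon :: "('g \<times> nat) list \<Rightarrow> ('g, 'f::field) gpoly" where
  "mon w = (\<lambda>u. if u = w then 1 else 0)"

fun pprod :: "('g, 'f::field) gpoly list \<Rightarrow> ('g, 'f) gpoly" where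
  "pprod [] = mon []"
| "pprod (p # ps) = pmul p (pprod ps)"

definition wdeg :: "('g, 'b) monoid_scheme \<Rightarrow> ('g \<times> nat) list \<Rightarrow> 'g" where
  "wdeg G w = foldr (\<lambda>v acc. fst v \<otimes>\<^bsub>G\<^esub> acc) w \<one>\<^bsub>G\<^esub>"

definition homogeneous :: "('g, 'b) monoid_scheme \<Rightarrow> 'g \<Rightarrow> ('g, 'f::field) gpoly \<Rightarrow> bool" where
  "homogeneous G h p \<longleftrightarrow> (\<forall>w\<in>supp p. wdeg G w = h)"

definition psubst :: "('g \<times> nat \<Rightarrow> ('g, 'f::field) gpoly) \<Rightarrow> ('g, 'f) gpoly \<Rightarrow> ('g, 'f) gpoly" where
  "psubst \<tau> p = (\<lambda>u. \<Sum>w\<in>supp p. p w * pprod (map \<tau> w) u)"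

definition graded_subst :: "('g, 'b) monoid_scheme \<Rightarrow> ('g \<times> nat \<Rightarrow> ('g, 'f::field) gpoly) \<Rightarrow> bool" where
  "graded_subst G \<tau> \<longleftrightarrow> (\<forall>h i. h \<in> carrier G \<longrightarrow> is_gpoly G (\<tau> (h, i)) \<and> homogeneous G h (\<tau> (h, i)))"

definition TG_ideal :: "('g, 'b) monoid_scheme \<Rightarrow> ('g, 'f::field) gpoly set \<Rightarrow> bool" where
  "TG_ideal G I \<longleftrightarrow> I \<subseteq> {p. is_gpoly G p} \<and> pzero \<in> I \<and>
     (\<forall>p\<in>I. \<forall>q\<in>I. padd p q \<in> I) \<and>
     (\<forall>c. \<forall>p\<in>I. psmult c p \<in> I) \<and>
     (\<forall>p\<in>I. \<forall>q. is_gpoly G q \<longrightarrow> pmul q p \<in> I \<and> pmul p q \<in> I) \<and>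
     (\<forall>p\<in>I. \<forall>\<tau>. graded_subst G \<tau> \<longrightarrow> psubst \<tau> p \<in> I)"

definition TG_generated :: "('g, 'b) monoid_scheme \<Rightarrow> ('g, 'f::field) gpoly set \<Rightarrow> ('g, 'f) gpoly set" where
  "TG_generated G S = \<Inter> {I. TG_ideal G I \<and> S \<subseteq> I}"

definition peval :: "('g \<times> nat \<Rightarrow> ('f::field, 'n::finite) sqmat) \<Rightarrow> ('g, 'f) gpoly \<Rightarrow> ('f, 'n) sqmat" where
  "peval \<sigma> p = (\<lambda>i j. \<Sum>w\<in>supp p. p w * mprod (map \<sigma> w) i j)"

definition graded_ids :: "('g, 'b) monoid_scheme \<Rightarrow> ('g \<Rightarrow> ('f::field, 'n::finite) sqmat set) \<Rightarrow> ('g, 'f) gpoly set" where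
  "graded_ids G Bc = {p. is_gpoly G p \<and>
     (\<forall>\<sigma>. (\<forall>h i. h \<in> carrier G \<longrightarrow> \<sigma> (h, i) \<in> Bc h) \<longrightarrow> peval \<sigma> p = mzero)}"

definition mlmon :: "'g list \<Rightarrow> ('g, 'f::field) gpoly" where
  "mlmon hs = mon (zip hs [1..<length hs + 1])"

end

(*
  A product of homogeneous elements of B is a sum over walks in the graph S (transitive, since B
  is a subalgebra), the letter of degree h leading from a to the unique b with g_a^-1 g_b = h.
  Evaluating a graded identity at generic homogeneous matrices, with one independent variable for
  every labelled edge, shows (the field being infinite) that for every vertex a the coefficients
  of the words whose walks from a traverse the same multiset of labelled edges sum to zero.
  Two such words are congruent modulo the identities (i) and (ii): these allow to interchange two
  closed walks and to reverse a walk a -> b -> a -> b, which suffices to move the first letter of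
  one word to the front of the other. A word admitting no walk at all is a consequence of (iii),
  or else of a monomial identity obtained by merging blocks of the word into single letters;
  following the set of vertices still reachable shows that at most 2n - 1 blocks are needed.
  Induction on the size of the support then puts every graded identity into the T_G-ideal
  generated by these polynomials.
*)

theory Submission
  imports Defs "HOL-Computational_Algebra.Polynomial" "HOL-Library.Multiset"
begin

lemma sum_UNIV_eq_single:
  fixes f :: "'n::finite \<Rightarrow> 'a::comm_monoid_add"
  assumes "\<And>k. k \<noteq> b \<Longrightarrow> f k = 0"
  shows "(\<Sum>k\<in>UNIV. f k) = f b"
proof -
  have "(\<Sum>k\<in>UNIV. f k) = (\<Sum>k\<in>{b}. f k)"
    by (rule sum.mono_neutral_right) (use assms in auto)
  then show ?thesis by simp
qed

lemma mmul_assoc: "mmul (mmul X Y) Z = mmul X (mmul Y Z)"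
proof (intro ext)
  fix i j
  have "mmul (mmul X Y) Z i j = (\<Sum>k\<in>UNIV. \<Sum>l\<in>UNIV. X i l * Y l k * Z k j)"
    by (simp add: mmul_def sum_distrib_right)
  also have "\<dots> = (\<Sum>l\<in>UNIV. \<Sum>k\<in>UNIV. X i l * Y l k * Z k j)"
    by (rule sum.swap)
  also have "\<dots> = mmul X (mmul Y Z) i j"
    by (simp add: mmul_def sum_distrib_left mult.assoc)
  finally show "mmul (mmul X Y) Z i j = mmul X (mmul Y Z) i j" .
qed

lemma mmul_mid_right: "mmul X mid = X"
proof (intro ext)
  fix i j
  have "(\<Sum>k\<in>UNIV. X i k * mid k j) = X i j * mid j j"
    by (rule sum_UNIV_eq_single) (simp add: mid_def)
  then show "mmul X mid i j = X i j" by (simp add: mmul_def mid_def)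
qed

lemma mmul_mid_left: "mmul mid X = X"
proof (intro ext)
  fix i j
  have "(\<Sum>k\<in>UNIV. mid i k * X k j) = mid i i * X i j"
    by (rule sum_UNIV_eq_single) (simp add: mid_def)
  then show "mmul mid X i j = X i j" by (simp add: mmul_def mid_def)
qed

lemma mmul_mzero_left: "mmul mzero X = mzero"
  by (simp add: mmul_def mzero_def)

lemma mmul_mzero_right: "mmul X mzero = mzero"
  by (simp add: mmul_def mzero_def)

lemma mprod_append: "mprod (xs @ ys) = mmul (mprod xs) (mprod ys)"
  by (induction xs) (auto simp: mmul_mid_left mmul_assoc)

lemma mon_apply: "mon w u = (if u = w then 1 else 0)"
  by (simp add: mon_def)

lemma supp_mon [simp]: "supp (mon w :: ('g, 'f::field) gpoly) = {w}"
  by (auto simp: supp_def mon_def)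

lemma supp_padd: "supp (padd p q) \<subseteq> supp p \<union> supp q"
  by (auto simp: supp_def padd_def)

lemma supp_psub: "supp (psub p q) \<subseteq> supp p \<union> supp q"
  by (auto simp: supp_def psub_def)

lemma supp_psmult: "supp (psmult c p) \<subseteq> supp p"
  by (auto simp: supp_def psmult_def)

lemma psub_self: "psub p p = pzero"
  by (auto simp: psub_def pzero_def)

lemma padd_psub_psub: "padd (psub p q) (psub q r) = psub p r"
  by (auto simp: psub_def padd_def)

lemma peval_superset:
  assumes "finite W" "supp p \<subseteq> W"
  shows "peval \<sigma> p = (\<lambda>i j. \<Sum>w\<in>W. p w * mprod (map \<sigma> w) i j)"
  unfolding peval_def
  by (intro ext sum.mono_neutral_left assms) (auto simp: supp_def)

lemma peval_mon: "peval \<sigma> (mon w) = mprod (map \<sigma> w)"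
  unfolding peval_def supp_mon by (simp add: mon_def)

lemma peval_pzero: "peval \<sigma> pzero = mzero"
  by (simp add: peval_def pzero_def supp_def mzero_def)

lemma peval_padd:
  assumes "finite (supp p)" "finite (supp q)"
  shows "peval \<sigma> (padd p q) = (\<lambda>i j. peval \<sigma> p i j + peval \<sigma> q i j)"
proof -
  let ?W = "supp p \<union> supp q"
  have W: "finite ?W" using assms by auto
  have "peval \<sigma> p = (\<lambda>i j. \<Sum>w\<in>?W. p w * mprod (map \<sigma> w) i j)"
    "peval \<sigma> q = (\<lambda>i j. \<Sum>w\<in>?W. q w * mprod (map \<sigma> w) i j)"
    by (rule peval_superset[OF W], auto)+
  then show ?thesis
    unfolding peval_superset[OF W supp_padd] by (auto simp: padd_def algebra_simps sum.distrib)
qed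

lemma peval_psub:
  assumes "finite (supp p)" "finite (supp q)"
  shows "peval \<sigma> (psub p q) = (\<lambda>i j. peval \<sigma> p i j - peval \<sigma> q i j)"
proof -
  let ?W = "supp p \<union> supp q"
  have W: "finite ?W" using assms by auto
  have "peval \<sigma> p = (\<lambda>i j. \<Sum>w\<in>?W. p w * mprod (map \<sigma> w) i j)"
    "peval \<sigma> q = (\<lambda>i j. \<Sum>w\<in>?W. q w * mprod (map \<sigma> w) i j)"
    by (rule peval_superset[OF W], auto)+
  then show ?thesis
    unfolding peval_superset[OF W supp_psub] by (auto simp: psub_def algebra_simps sum_subtractf)
qed

lemma peval_psmult:
  assumes "finite (supp p)"
  shows "peval \<sigma> (psmult c p) = (\<lambda>i j. c * peval \<sigma> p i j)"
  unfolding peval_superset[OF assms supp_psmult] peval_superset[OF assms order_refl]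
  by (auto simp: psmult_def sum_distrib_left mult.assoc)

lemma pmul_as_double_sum:
  assumes A: "finite A" "supp p \<subseteq> A" and B: "finite B" "supp q \<subseteq> B"
  shows "pmul p q u = (\<Sum>a\<in>A. \<Sum>b\<in>B. if a @ b = u then p a * q b else 0)"
proof -
  let ?prefix = "\<lambda>a. length a \<le> length u \<and> take (length a) u = a"
  have inner: "(\<Sum>b\<in>B. if a @ b = u then p a * q b else 0) =
      (if ?prefix a then p a * q (drop (length a) u) else 0)" for a
  proof (cases "?prefix a")
    case True
    then have eq: "a @ b = u \<longleftrightarrow> b = drop (length a) u" for b
      by (metis append_eq_conv_conj)
    show ?thesis
    proof (cases "drop (length a) u \<in> B")
      case True
      then show ?thesis using \<open>finite B\<close> \<open>?prefix a\<close> by (simp add: eq sum.delta')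
    next
      case False
      then have "q (drop (length a) u) = 0" using B by (auto simp: supp_def)
      then show ?thesis using False \<open>?prefix a\<close> by (auto simp: eq intro!: sum.neutral)
    qed
  qed (auto intro!: sum.neutral)
  let ?K = "{k. k \<le> length u \<and> take k u \<in> A}"
  let ?g = "\<lambda>a. p a * q (drop (length a) u)"
  have inj: "inj_on (\<lambda>k. take k u) ?K"
    by (rule inj_onI) (metis (no_types, lifting) length_take mem_Collect_eq min.absorb2)
  have img: "(\<lambda>k. take k u) ` ?K = {a\<in>A. ?prefix a}"
    by (auto simp: image_iff intro!: exI[of _ "length _"])
  have "pmul p q u = (\<Sum>k\<in>{..length u}. p (take k u) * q (drop k u))"
    by (simp add: pmul_def)
  also have "\<dots> = (\<Sum>k\<in>?K. p (take k u) * q (drop k u))"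
    by (rule sum.mono_neutral_right) (use A in \<open>auto simp: supp_def\<close>)
  also have "\<dots> = (\<Sum>k\<in>?K. ?g (take k u))"
    by (rule sum.cong) auto
  also have "\<dots> = (\<Sum>a\<in>{a\<in>A. ?prefix a}. ?g a)"
    using sum.reindex[OF inj, of ?g] img by (simp add: comp_def)
  also have "\<dots> = (\<Sum>a\<in>A. if ?prefix a then ?g a else 0)"
    using A by (simp add: sum.inter_filter)
  finally show ?thesis by (simp add: inner)
qed

lemma supp_pmul:
  assumes "finite (supp p)" "finite (supp q)"
  shows "supp (pmul p q) \<subseteq> (\<lambda>(a, b). a @ b) ` (supp p \<times> supp q)"
proof
  fix u assume "u \<in> supp (pmul p q)"
  then have "(\<Sum>a\<in>supp p. \<Sum>b\<in>supp q. if a @ b = u then p a * q b else 0) \<noteq> 0"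
    unfolding pmul_as_double_sum[OF assms(1) order_refl assms(2) order_refl] by (simp add: supp_def)
  then obtain a where a: "a \<in> supp p" "(\<Sum>b\<in>supp q. if a @ b = u then p a * q b else 0) \<noteq> 0"
    by (rule sum.not_neutral_contains_not_neutral)
  from a(2) obtain b where b: "b \<in> supp q" "(if a @ b = u then p a * q b else 0) \<noteq> 0"
    by (rule sum.not_neutral_contains_not_neutral)
  with a show "u \<in> (\<lambda>(a, b). a @ b) ` (supp p \<times> supp q)"
    by (auto split: if_splits)
qed

lemma finite_supp_pmul:
  assumes "finite (supp p)" "finite (supp q)"
  shows "finite (supp (pmul p q))"
  using supp_pmul[OF assms] assms by (meson finite_SigmaI finite_imageI finite_subset)

lemma peval_pmul:
  assumes fp: "finite (supp p)" and fq: "finite (supp q)"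
  shows "peval \<sigma> (pmul p q) = mmul (peval \<sigma> p) (peval \<sigma> q)"
proof (intro ext)
  fix i j
  let ?A = "supp p" and ?B = "supp q"
  let ?U = "(\<lambda>(a, b). a @ b) ` (?A \<times> ?B)"
  let ?M = "\<lambda>w. mprod (map \<sigma> w)"
  have U: "finite ?U" using fp fq by auto
  have "peval \<sigma> (pmul p q) i j = (\<Sum>u\<in>?U. pmul p q u * ?M u i j)"
    unfolding peval_superset[OF U supp_pmul[OF fp fq]] by simp
  also have "\<dots> = (\<Sum>u\<in>?U. \<Sum>a\<in>?A. \<Sum>b\<in>?B. (if a @ b = u then p a * q b else 0) * ?M u i j)"
    by (simp add: pmul_as_double_sum[OF fp order_refl fq order_refl] sum_distrib_right)
  also have "\<dots> = (\<Sum>a\<in>?A. \<Sum>b\<in>?B. \<Sum>u\<in>?U. (if a @ b = u then p a * q b else 0) * ?M u i j)"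
    by (subst sum.swap) (rule sum.cong[OF refl], rule sum.swap)
  also have "\<dots> = (\<Sum>a\<in>?A. \<Sum>b\<in>?B. p a * q b * ?M (a @ b) i j)"
  proof (intro sum.cong refl)
    fix a b assume "a \<in> ?A" "b \<in> ?B"
    then have "a @ b \<in> ?U" by auto
    have "(\<Sum>u\<in>?U. (if a @ b = u then p a * q b else 0) * ?M u i j) =
        (\<Sum>u\<in>?U. if a @ b = u then p a * q b * ?M (a @ b) i j else 0)"
      by (rule sum.cong) auto
    then show "(\<Sum>u\<in>?U. (if a @ b = u then p a * q b else 0) * ?M u i j) =
        p a * q b * ?M (a @ b) i j"
      using U \<open>a @ b \<in> ?U\<close> by simp
  qed
  also have "\<dots> = (\<Sum>a\<in>?A. \<Sum>b\<in>?B. \<Sum>k\<in>UNIV. p a * q b * (?M a i k * ?M b k j))"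
    by (simp add: mprod_append mmul_def sum_distrib_left)
  also have "\<dots> = (\<Sum>k\<in>UNIV. \<Sum>a\<in>?A. \<Sum>b\<in>?B. p a * q b * (?M a i k * ?M b k j))"
    by (subst sum.swap) (rule sum.cong[OF refl], rule sum.swap)
  also have "\<dots> = (\<Sum>k\<in>UNIV. (\<Sum>a\<in>?A. p a * ?M a i k) * (\<Sum>b\<in>?B. q b * ?M b k j))"
    by (simp add: sum_product mult_ac)
  also have "\<dots> = mmul (peval \<sigma> p) (peval \<sigma> q) i j"
    by (simp add: mmul_def peval_def)
  finally show "peval \<sigma> (pmul p q) i j = mmul (peval \<sigma> p) (peval \<sigma> q) i j" .
qed

lemma pmul_mon_mon: "pmul (mon a) (mon b) = (mon (a @ b) :: ('g, 'f::field) gpoly)"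
  by (rule ext, subst pmul_as_double_sum[of "{a}" "mon a" "{b}" "mon b"])
    (simp_all, auto simp: mon_def)

lemma pmul_psub_right: "pmul p (psub q r) = psub (pmul p q) (pmul p r)"
  by (auto simp: pmul_def psub_def algebra_simps sum_subtractf intro!: ext)

lemma pmul_psub_left: "pmul (psub q r) p = psub (pmul q p) (pmul r p)"
  by (auto simp: pmul_def psub_def algebra_simps sum_subtractf intro!: ext)

lemma pmul_Nil: "pmul p q [] = p [] * q []"
  by (simp add: pmul_def)

lemma pprod_map_mon:
  "pprod (map (\<lambda>v. mon (f v)) w) = (mon (concat (map f w)) :: ('g, 'f::field) gpoly)"
  by (induction w) (auto simp: pmul_mon_mon)

lemma finite_supp_pprod: "(\<And>q. q \<in> set qs \<Longrightarrow> finite (supp q)) \<Longrightarrow> finite (supp (pprod qs))"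
  by (induction qs) (auto intro: finite_supp_pmul)

lemma peval_pprod:
  "(\<And>q. q \<in> set qs \<Longrightarrow> finite (supp q)) \<Longrightarrow> peval \<sigma> (pprod qs) = mprod (map (peval \<sigma>) qs)"
  by (induction qs) (auto simp: peval_mon peval_pmul finite_supp_pprod)

lemma psubst_superset:
  assumes "finite W" "supp p \<subseteq> W"
  shows "psubst \<tau> p = (\<lambda>u. \<Sum>w\<in>W. p w * pprod (map \<tau> w) u)"
  unfolding psubst_def
  by (intro ext sum.mono_neutral_left assms) (auto simp: supp_def)

lemma psubst_mon:
  "psubst (\<lambda>v. mon (f v)) (mon w) = (mon (concat (map f w)) :: ('g, 'f::field) gpoly)"
  unfolding psubst_def supp_mon by (simp add: pprod_map_mon mon_apply fun_eq_iff)

lemma psubst_psub_mon: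
  assumes "w1 \<noteq> w2"
  shows "psubst (\<lambda>v. mon (f v)) (psub (mon w1) (mon w2)) =
     (psub (mon (concat (map f w1))) (mon (concat (map f w2))) :: ('g, 'f::field) gpoly)"
proof (rule ext)
  fix u
  have "supp (psub (mon w1) (mon w2) :: ('g, 'f) gpoly) \<subseteq> {w1, w2}"
    using supp_psub[of "mon w1" "mon w2"] by auto
  then have "psubst (\<lambda>v. mon (f v)) (psub (mon w1) (mon w2) :: ('g, 'f) gpoly) u =
      (\<Sum>w\<in>{w1, w2}. psub (mon w1) (mon w2) w * pprod (map (\<lambda>v. mon (f v)) w) u)"
    by (subst psubst_superset) auto
  also have "\<dots> = psub (mon (concat (map f w1))) (mon (concat (map f w2))) u"
    using assms by (simp add: pprod_map_mon psub_def mon_apply)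
  finally show "psubst (\<lambda>v. mon (f v)) (psub (mon w1) (mon w2)) u =
      (psub (mon (concat (map f w1))) (mon (concat (map f w2))) :: ('g, 'f) gpoly) u" .
qed

lemma supp_psubst: "supp (psubst \<tau> p) \<subseteq> (\<Union>w\<in>supp p. supp (pprod (map \<tau> w)))"
proof
  fix u assume "u \<in> supp (psubst \<tau> p)"
  then have "(\<Sum>w\<in>supp p. p w * pprod (map \<tau> w) u) \<noteq> 0"
    by (simp add: supp_def psubst_def)
  then obtain w where "w \<in> supp p" "p w * pprod (map \<tau> w) u \<noteq> 0"
    by (rule sum.not_neutral_contains_not_neutral)
  then show "u \<in> (\<Union>w\<in>supp p. supp (pprod (map \<tau> w)))" by (auto simp: supp_def)
qed

lemma peval_psubst:
  assumes fp: "finite (supp p)"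
    and ft: "\<And>w v. w \<in> supp p \<Longrightarrow> v \<in> set w \<Longrightarrow> finite (supp (\<tau> v))"
  shows "peval \<sigma> (psubst \<tau> p) = peval (\<lambda>v. peval \<sigma> (\<tau> v)) p"
proof (intro ext)
  fix i j
  let ?U = "\<Union>w\<in>supp p. supp (pprod (map \<tau> w))"
  let ?M = "\<lambda>w. mprod (map \<sigma> w)"
  have fw: "finite (supp (pprod (map \<tau> w)))" if "w \<in> supp p" for w
    using ft[OF that] by (intro finite_supp_pprod) auto
  have U: "finite ?U" using fp fw by auto
  have "peval \<sigma> (psubst \<tau> p) i j = (\<Sum>u\<in>?U. \<Sum>w\<in>supp p. p w * (pprod (map \<tau> w) u * ?M u i j))"
    unfolding peval_superset[OF U supp_psubst]
    by (simp add: psubst_def sum_distrib_right mult.assoc)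
  also have "\<dots> = (\<Sum>w\<in>supp p. p w * (\<Sum>u\<in>?U. pprod (map \<tau> w) u * ?M u i j))"
    by (subst sum.swap) (simp add: sum_distrib_left)
  also have "\<dots> = (\<Sum>w\<in>supp p. p w * peval \<sigma> (pprod (map \<tau> w)) i j)"
  proof (intro sum.cong refl arg_cong2[where f = "(*)"])
    fix w assume "w \<in> supp p"
    then have sub: "supp (pprod (map \<tau> w)) \<subseteq> ?U" by auto
    show "(\<Sum>u\<in>?U. pprod (map \<tau> w) u * ?M u i j) = peval \<sigma> (pprod (map \<tau> w)) i j"
      unfolding peval_superset[OF U sub] by simp
  qed
  also have "\<dots> = (\<Sum>w\<in>supp p. p w * mprod (map (\<lambda>v. peval \<sigma> (\<tau> v)) w) i j)"
    by (intro sum.cong refl) (subst peval_pprod, use ft in \<open>auto simp: comp_def\<close>)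
  also have "\<dots> = peval (\<lambda>v. peval \<sigma> (\<tau> v)) p i j"
    by (simp only: peval_def comp_def)
  finally show "peval \<sigma> (psubst \<tau> p) i j = peval (\<lambda>v. peval \<sigma> (\<tau> v)) p i j" .
qed

lemma is_gpoly_mon:
  "w \<noteq> [] \<Longrightarrow> (\<forall>v\<in>set w. fst v \<in> carrier G) \<Longrightarrow> is_gpoly G (mon w :: ('g, 'f::field) gpoly)"
  unfolding is_gpoly_def supp_mon by (auto simp: mon_def)

lemma is_gpoly_pzero: "is_gpoly G (pzero :: ('g, 'f::field) gpoly)"
  by (auto simp: is_gpoly_def pzero_def supp_def)

lemma is_gpoly_padd: "is_gpoly G p \<Longrightarrow> is_gpoly G q \<Longrightarrow> is_gpoly G (padd p q)"
  unfolding is_gpoly_def using supp_padd[of p q] by (auto simp: padd_def intro: finite_subset)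

lemma is_gpoly_psub: "is_gpoly G p \<Longrightarrow> is_gpoly G q \<Longrightarrow> is_gpoly G (psub p q)"
  unfolding is_gpoly_def using supp_psub[of p q] by (auto simp: psub_def intro: finite_subset)

lemma is_gpoly_psmult: "is_gpoly G p \<Longrightarrow> is_gpoly G (psmult c p)"
  unfolding is_gpoly_def using supp_psmult[of c p] by (auto simp: psmult_def intro: finite_subset)

lemma is_gpoly_pmul:
  assumes "is_gpoly G p" "is_gpoly G q"
  shows "is_gpoly G (pmul p q)"
proof -
  have f: "finite (supp p)" "finite (supp q)" using assms by (auto simp: is_gpoly_def)
  show ?thesis unfolding is_gpoly_def
  proof (intro conjI ballI)
    show "finite (supp (pmul p q))" using finite_supp_pmul[OF f] .
    show "pmul p q [] = 0" using assms by (simp add: pmul_Nil is_gpoly_def)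
    fix w v assume "w \<in> supp (pmul p q)" "v \<in> set w"
    with supp_pmul[OF f] obtain a b where "a \<in> supp p" "b \<in> supp q" "w = a @ b" by auto
    with \<open>v \<in> set w\<close> assms show "fst v \<in> carrier G" by (auto simp: is_gpoly_def)
  qed
qed

lemma pprod_letters_in_carrier:
  assumes "\<And>q. q \<in> set qs \<Longrightarrow> is_gpoly G q"
  shows "\<forall>u\<in>supp (pprod qs). \<forall>v\<in>set u. fst v \<in> carrier G"
  using assms
proof (induction qs)
  case (Cons q qs)
  have "finite (supp q)" "finite (supp (pprod qs))"
    using Cons.prems by (auto simp: is_gpoly_def intro!: finite_supp_pprod)
  with supp_pmul[OF this] Cons show ?case by (fastforce simp: is_gpoly_def)
qed simp

lemma is_gpoly_psubst:
  assumes p: "is_gpoly G p" and t: "graded_subst G \<tau>"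
  shows "is_gpoly G (psubst \<tau> p)"
proof -
  have tg: "is_gpoly G (\<tau> v)" if "w \<in> supp p" "v \<in> set w" for w v
  proof -
    have "fst v \<in> carrier G" using p that by (auto simp: is_gpoly_def)
    then show ?thesis using t by (cases v) (auto simp: graded_subst_def)
  qed
  have fw: "finite (supp (pprod (map \<tau> w)))" if "w \<in> supp p" for w
    using tg[OF that] by (intro finite_supp_pprod) (auto simp: is_gpoly_def)
  show ?thesis unfolding is_gpoly_def
  proof (intro conjI ballI)
    show "finite (supp (psubst \<tau> p))"
      using supp_psubst[of \<tau> p] p fw by (auto simp: is_gpoly_def intro: finite_subset)
    have "pprod (map \<tau> w) [] = 0" if "w \<in> supp p" for w
      using that p tg[OF that] by (cases w) (auto simp: pmul_Nil is_gpoly_def supp_def)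
    then show "psubst \<tau> p [] = 0" by (simp add: psubst_def)
    fix u v assume "u \<in> supp (psubst \<tau> p)" "v \<in> set u"
    then obtain w where w: "w \<in> supp p" "u \<in> supp (pprod (map \<tau> w))" using supp_psubst by blast
    have "\<forall>u\<in>supp (pprod (map \<tau> w)). \<forall>v\<in>set u. fst v \<in> carrier G"
      by (rule pprod_letters_in_carrier) (use tg w in auto)
    with w \<open>v \<in> set u\<close> show "fst v \<in> carrier G" by auto
  qed
qed

definition gprod :: "('g, 'b) monoid_scheme \<Rightarrow> 'g list \<Rightarrow> 'g" where
  "gprod G hs = foldr (\<lambda>h acc. h \<otimes>\<^bsub>G\<^esub> acc) hs \<one>\<^bsub>G\<^esub>"

lemma gprod_simps [simp]:
  "gprod G [] = \<one>\<^bsub>G\<^esub>"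
  "gprod G (h # hs) = h \<otimes>\<^bsub>G\<^esub> gprod G hs"
  by (simp_all add: gprod_def)

lemma wdeg_eq_gprod: "wdeg G w = gprod G (map fst w)"
  by (induction w) (simp_all add: wdeg_def)

lemma graded_subst_mon:
  assumes "\<And>h i. h \<in> carrier G \<Longrightarrow>
    f (h, i) \<noteq> [] \<and> (\<forall>v\<in>set (f (h, i)). fst v \<in> carrier G) \<and> gprod G (map fst (f (h, i))) = h"
  shows "graded_subst G (\<lambda>v. mon (f v) :: ('g, 'f::field) gpoly)"
  unfolding graded_subst_def
proof (intro allI impI conjI)
  fix h i assume "h \<in> carrier G"
  with assms show "is_gpoly G (mon (f (h, i)) :: ('g, 'f) gpoly)"
    by (intro is_gpoly_mon) auto
  from \<open>h \<in> carrier G\<close> assms show "homogeneous G h (mon (f (h, i)) :: ('g, 'f) gpoly)"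
    by (simp add: homogeneous_def wdeg_eq_gprod)
qed

section \<open>Walks in the support of a subalgebra spanned by matrix units\<close>

lemma unit_span_subalgebra_trans:
  assumes B: "is_subalgebra (unit_span S :: ('f::field, 'n::finite) sqmat set)"
    and ab: "(a, b) \<in> S" and bc: "(b, c) \<in> S"
  shows "(a, c) \<in> S"
proof -
  define E :: "'n \<Rightarrow> 'n \<Rightarrow> ('f, 'n) sqmat" where "E = (\<lambda>k l i j. if i = k \<and> j = l then 1 else 0)"
  have "E a b \<in> unit_span S" "E b c \<in> unit_span S"
    using ab bc by (auto simp: unit_span_def E_def)
  then have "mmul (E a b) (E b c) \<in> unit_span S"
    using B by (simp add: is_subalgebra_def)
  moreover have "mmul (E a b) (E b c) a c = E a b a b * E b c b c"
    unfolding mmul_def by (rule sum_UNIV_eq_single) (simp add: E_def)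
  ultimately show ?thesis by (auto simp: unit_span_def E_def)
qed

text \<open>A word of degrees is read as a walk in the graph S: from a, the letter h leads to the unique
  b with (a, b) in S and inv (gs a) \<otimes> gs b = h (unique since gs is injective).\<close>

locale elementary_unit_span = group G for G (structure) +
  fixes gs :: "'n::finite \<Rightarrow> 'g" and S :: "('n \<times> 'n) set"
  assumes gs_closed: "\<And>i. gs i \<in> carrier G"
    and gs_inj: "inj gs"
    and S_trans: "\<And>a b c. (a, b) \<in> S \<Longrightarrow> (b, c) \<in> S \<Longrightarrow> (a, c) \<in> S"
begin

lemma inv_gs_mult_cancel_right: "inv (gs a) \<otimes> gs b = inv (gs a) \<otimes> gs c \<Longrightarrow> b = c"
  using gs_closed gs_inj by (simp add: inj_eq)

lemma inv_gs_mult_cancel_left: "inv (gs a) \<otimes> gs c = inv (gs b) \<otimes> gs c \<Longrightarrow> a = b"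
  using gs_closed gs_inj by (metis inv_closed inv_inv right_cancel injD)

definition step :: "'n \<Rightarrow> 'g \<Rightarrow> 'n option" where
  "step a h = (if \<exists>b. (a, b) \<in> S \<and> inv (gs a) \<otimes> gs b = h
     then Some (THE b. (a, b) \<in> S \<and> inv (gs a) \<otimes> gs b = h) else None)"

lemma step_eq_Some_iff: "step a h = Some b \<longleftrightarrow> (a, b) \<in> S \<and> inv (gs a) \<otimes> gs b = h"
proof
  assume step: "step a h = Some b"
  then obtain b0 where b0: "(a, b0) \<in> S \<and> inv (gs a) \<otimes> gs b0 = h"
    by (auto simp: step_def split: if_splits)
  then have "(THE b. (a, b) \<in> S \<and> inv (gs a) \<otimes> gs b = h) = b0"
    using inv_gs_mult_cancel_right by blast
  with b0 have "step a h = Some b0" by (auto simp: step_def)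
  with step b0 show "(a, b) \<in> S \<and> inv (gs a) \<otimes> gs b = h" by simp
next
  assume b: "(a, b) \<in> S \<and> inv (gs a) \<otimes> gs b = h"
  then have "(THE b. (a, b) \<in> S \<and> inv (gs a) \<otimes> gs b = h) = b"
    using inv_gs_mult_cancel_right by blast
  with b show "step a h = Some b" by (auto simp: step_def)
qed

lemma step_closed: "step a h = Some b \<Longrightarrow> h \<in> carrier G"
  using gs_closed by (auto simp: step_eq_Some_iff)

lemma step_one: "step a \<one> = Some b \<Longrightarrow> b = a"
  using gs_closed inv_gs_mult_cancel_right[of a b a] by (simp add: step_eq_Some_iff)

lemma step_inv: "step a h = Some b \<Longrightarrow> step b (inv h) = Some c \<Longrightarrow> c = a"
  using gs_closed inv_gs_mult_cancel_right[of b c a] by (auto simp: step_eq_Some_iff inv_mult_group)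

primrec walk_end :: "'n \<Rightarrow> 'g list \<Rightarrow> 'n option" where
  "walk_end a [] = Some a"
| "walk_end a (h # hs) = (case step a h of None \<Rightarrow> None | Some b \<Rightarrow> walk_end b hs)"

lemma walk_end_append:
  "walk_end a (xs @ ys) = (case walk_end a xs of None \<Rightarrow> None | Some b \<Rightarrow> walk_end b ys)"
  by (induction xs arbitrary: a) (auto split: option.splits)

lemma walk_end_closed: "walk_end a hs = Some b \<Longrightarrow> set hs \<subseteq> carrier G"
  by (induction hs arbitrary: a) (auto split: option.splits dest: step_closed)

lemma walk_end_degree: "walk_end a hs = Some b \<Longrightarrow> inv (gs a) \<otimes> gs b = gprod G hs"
proof (induction hs arbitrary: a)
  case Nil
  then show ?case using gs_closed by simp
next
  case (Cons h hs)
  then obtain c where c: "step a h = Some c" "walk_end c hs = Some b"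
    by (auto split: option.splits)
  have "gprod G (h # hs) = (inv (gs a) \<otimes> gs c) \<otimes> (inv (gs c) \<otimes> gs b)"
    using c Cons.IH by (simp add: step_eq_Some_iff)
  also have "\<dots> = inv (gs a) \<otimes> gs b"
    using gs_closed by (simp add: m_assoc flip: m_assoc[of "gs c"])
  finally show ?case by simp
qed

lemma walk_end_in_S: "walk_end a hs = Some b \<Longrightarrow> hs \<noteq> [] \<Longrightarrow> (a, b) \<in> S"
proof (induction hs arbitrary: a)
  case (Cons h hs)
  then obtain c where c: "step a h = Some c" "walk_end c hs = Some b"
    by (auto split: option.splits)
  then show ?case
    using Cons.IH S_trans by (cases "hs = []") (auto simp: step_eq_Some_iff)
qed simp

lemma walk_end_gprod:
  "walk_end a hs = Some b \<Longrightarrow> hs \<noteq> [] \<Longrightarrow> walk_end a [gprod G hs] = Some b"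
proof -
  assume "walk_end a hs = Some b" "hs \<noteq> []"
  then have "step a (gprod G hs) = Some b"
    using walk_end_in_S walk_end_degree by (simp add: step_eq_Some_iff)
  then show ?thesis by simp
qed

lemma walk_end_inj: "walk_end a hs = Some c \<Longrightarrow> walk_end a' hs = Some c \<Longrightarrow> a = a'"
  using walk_end_degree inv_gs_mult_cancel_left by metis

abbreviation word_end :: "'n \<Rightarrow> ('g \<times> nat) list \<Rightarrow> 'n option" where
  "word_end a w \<equiv> walk_end a (map fst w)"

lemma word_end_closed: "word_end a w = Some b \<Longrightarrow> \<forall>v\<in>set w. fst v \<in> carrier G"
  using walk_end_closed by fastforce

text \<open>Edges are recorded as (letter, source, target). For a word without a walk from a, only the
  edges up to the first missing step are recorded.\<close>

primrec walk_edges :: "'n \<Rightarrow> ('g \<times> nat) list \<Rightarrow> (('g \<times> nat) \<times> 'n \<times> 'n) multiset" where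
  "walk_edges a [] = {#}"
| "walk_edges a (l # w) =
    (case step a (fst l) of None \<Rightarrow> {#} | Some b \<Rightarrow> add_mset (l, a, b) (walk_edges b w))"

lemma walk_edges_append:
  "word_end a x = Some b \<Longrightarrow> walk_edges a (x @ y) = walk_edges a x + walk_edges b y"
  by (induction x arbitrary: a) (auto split: option.splits)

lemma size_walk_edges: "word_end a w \<noteq> None \<Longrightarrow> size (walk_edges a w) = length w"
  by (induction w arbitrary: a) (auto split: option.splits)

lemma walk_edges_split:
  assumes "x \<in># walk_edges a w"
  shows "\<exists>u v. w = u @ fst x # v \<and> word_end a u = Some (fst (snd x)) \<and>
      step (fst (snd x)) (fst (fst x)) = Some (snd (snd x))"
  using assms
proof (induction w arbitrary: a)
  case (Cons l r)
  then obtain b where b: "step a (fst l) = Some b" and x: "x = (l, a, b) \<or> x \<in># walk_edges b r"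
    by (auto split: option.splits)
  show ?case
  proof (cases "x = (l, a, b)")
    case True
    then show ?thesis using b by (intro exI[of _ "[]"] exI[of _ r]) auto
  next
    case False
    with x Cons.IH obtain u v where "r = u @ fst x # v" "word_end b u = Some (fst (snd x))"
        "step (fst (snd x)) (fst (fst x)) = Some (snd (snd x))"
      by blast
    with b have "l # r = (l # u) @ fst x # v \<and> word_end a (l # u) = Some (fst (snd x)) \<and>
        step (fst (snd x)) (fst (fst x)) = Some (snd (snd x))"
      by simp
    then show ?thesis by blast
  qed
qed simp

lemma walk_edges_avoid:
  assumes "word_end c r \<noteq> None" "c \<notin> V" "walk_edges c r \<subseteq># M"
    and "\<And>x. x \<in># M \<Longrightarrow> fst (snd x) \<notin> V \<Longrightarrow> snd (snd x) \<notin> V"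
  shows "\<forall>x\<in>#walk_edges c r. fst (snd x) \<notin> V"
  using assms(1-3)
proof (induction r arbitrary: c)
  case (Cons m r)
  then obtain d where d: "step c (fst m) = Some d" by (auto split: option.splits)
  then have edges: "walk_edges c (m # r) = add_mset (m, c, d) (walk_edges d r)" by simp
  have "(m, c, d) \<in># M" using Cons.prems edges by (metis mset_subset_eq_insertD)
  then have "d \<notin> V" using assms(4)[of "(m, c, d)"] Cons.prems by auto
  moreover have "walk_edges d r \<subseteq># M"
    using Cons.prems edges subset_mset.order_trans[of "walk_edges d r" "walk_edges c (m # r)" M]
    by simp
  moreover have "word_end d r \<noteq> None" using Cons.prems d by simp
  ultimately show ?case using Cons.IH Cons.prems edges by auto
qed simp

definition Bcomp :: "'g \<Rightarrow> ('f::field, 'n) sqmat set" where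
  "Bcomp h = unit_span S \<inter> elem_comp G gs h"

lemma mem_Bcomp_iff: "X \<in> Bcomp h \<longleftrightarrow> (\<forall>a b. X a b \<noteq> 0 \<longrightarrow> step a h = Some b)"
  by (auto simp: Bcomp_def unit_span_def elem_comp_def step_eq_Some_iff)

lemma Bcomp_nonzero:
  assumes "step a h = Some b"
  shows "Bcomp h \<noteq> {mzero :: ('f::field, 'n) sqmat}"
proof
  let ?E = "(\<lambda>i j. if i = a \<and> j = b then 1 else 0) :: ('f, 'n) sqmat"
  assume "Bcomp h = {mzero :: ('f, 'n) sqmat}"
  moreover have "?E \<in> Bcomp h" using assms by (auto simp: mem_Bcomp_iff)
  ultimately have "?E = mzero" by auto
  then have "?E a b = mzero a b" by (rule arg_cong[where f = "\<lambda>M. M a b"])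
  then show False by (simp add: mzero_def)
qed

lemma Bcomp_zero: "(\<And>a. step a h = None) \<Longrightarrow> Bcomp h = {mzero :: ('f::field, 'n) sqmat}"
  by (auto simp: mem_Bcomp_iff mzero_def fun_eq_iff)

definition graded_assignment :: "('g \<times> nat \<Rightarrow> ('f::field, 'n) sqmat) \<Rightarrow> bool" where
  "graded_assignment \<sigma> \<longleftrightarrow> (\<forall>h i. h \<in> carrier G \<longrightarrow> \<sigma> (h, i) \<in> Bcomp h)"

lemma mem_graded_ids_iff:
  "p \<in> graded_ids G Bcomp \<longleftrightarrow> is_gpoly G p \<and> (\<forall>\<sigma>. graded_assignment \<sigma> \<longrightarrow> peval \<sigma> p = mzero)"
  by (simp add: graded_ids_def graded_assignment_def)

primrec walk_weight :: "('g \<times> nat \<Rightarrow> ('f::field, 'n) sqmat) \<Rightarrow> 'n \<Rightarrow> ('g \<times> nat) list \<Rightarrow> 'f" where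
  "walk_weight \<sigma> a [] = 1"
| "walk_weight \<sigma> a (l # w) =
    (case step a (fst l) of None \<Rightarrow> 0 | Some b \<Rightarrow> \<sigma> l a b * walk_weight \<sigma> b w)"

lemma walk_weight_eq_prod_edges:
  "word_end a w \<noteq> None \<Longrightarrow>
    walk_weight \<sigma> a w = (\<Prod>x\<in>#walk_edges a w. \<sigma> (fst x) (fst (snd x)) (snd (snd x)))"
  by (induction w arbitrary: a) (auto split: option.splits)

lemma mprod_graded_assignment:
  assumes \<sigma>: "graded_assignment \<sigma>" and w: "\<forall>v\<in>set w. fst v \<in> carrier G"
  shows "mprod (map \<sigma> w) a c = (if word_end a w = Some c then walk_weight \<sigma> a w else 0)"
  using w
proof (induction w arbitrary: a)
  case Nil
  then show ?case by (simp add: mid_def)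
next
  case (Cons l w)
  have l: "\<sigma> l a k \<noteq> 0 \<Longrightarrow> step a (fst l) = Some k" for k
    using \<sigma> Cons.prems by (cases l) (auto simp: graded_assignment_def mem_Bcomp_iff)
  show ?case
  proof (cases "step a (fst l)")
    case None
    then show ?thesis using l by (fastforce simp: mmul_def)
  next
    case (Some b)
    have "mprod (map \<sigma> (l # w)) a c = \<sigma> l a b * mprod (map \<sigma> w) b c"
      unfolding mprod.simps list.map mmul_def
      by (rule sum_UNIV_eq_single) (use l Some in fastforce)
    then show ?thesis using Cons Some by auto
  qed
qed

lemma peval_homogeneous:
  assumes \<sigma>: "graded_assignment \<sigma>" and q: "is_gpoly G q" "homogeneous G h q"
  shows "peval \<sigma> q \<in> Bcomp h"
  unfolding mem_Bcomp_iff
proof (intro allI impI)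
  fix a b assume "peval \<sigma> q a b \<noteq> 0"
  then obtain w where w: "w \<in> supp q" "mprod (map \<sigma> w) a b \<noteq> 0"
    unfolding peval_def by (auto elim: sum.not_neutral_contains_not_neutral)
  moreover have "\<forall>v\<in>set w. fst v \<in> carrier G" "w \<noteq> []"
    using q w by (auto simp: is_gpoly_def supp_def)
  ultimately have "word_end a w = Some b" "map fst w \<noteq> []"
    using mprod_graded_assignment[OF \<sigma>] by (auto split: if_splits)
  then have "walk_end a [gprod G (map fst w)] = Some b"
    by (rule walk_end_gprod)
  moreover have "gprod G (map fst w) = h"
    using q w by (simp add: homogeneous_def wdeg_eq_gprod)
  ultimately show "step a h = Some b" by (simp split: option.splits)
qed

lemma psubst_mem_graded_ids:
  assumes p: "p \<in> graded_ids G (Bcomp :: 'g \<Rightarrow> ('f::field, 'n) sqmat set)" and t: "graded_subst G \<tau>"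
  shows "psubst \<tau> p \<in> graded_ids G (Bcomp :: 'g \<Rightarrow> ('f, 'n) sqmat set)"
  unfolding mem_graded_ids_iff
proof (intro conjI allI impI)
  have gp: "is_gpoly G p" using p by (simp add: mem_graded_ids_iff)
  then show "is_gpoly G (psubst \<tau> p)" using t by (rule is_gpoly_psubst)
  fix \<sigma> :: "'g \<times> nat \<Rightarrow> ('f, 'n) sqmat"
  assume \<sigma>: "graded_assignment \<sigma>"
  have "finite (supp (\<tau> v))" if "w \<in> supp p" "v \<in> set w" for w v
  proof -
    have "fst v \<in> carrier G" using gp that by (auto simp: is_gpoly_def)
    then show ?thesis using t by (cases v) (auto simp: graded_subst_def is_gpoly_def)
  qed
  then have "peval \<sigma> (psubst \<tau> p) = peval (\<lambda>v. peval \<sigma> (\<tau> v)) p"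
    using gp by (intro peval_psubst) (auto simp: is_gpoly_def)
  also have "\<dots> = mzero"
  proof -
    have "graded_assignment (\<lambda>v. peval \<sigma> (\<tau> v))"
      using \<sigma> t by (auto simp: graded_assignment_def graded_subst_def intro!: peval_homogeneous)
    then show ?thesis using p by (simp add: mem_graded_ids_iff)
  qed
  finally show "peval \<sigma> (psubst \<tau> p) = mzero" .
qed

lemma TG_ideal_graded_ids: "TG_ideal G (graded_ids G (Bcomp :: 'g \<Rightarrow> ('f::field, 'n) sqmat set))"
  unfolding TG_ideal_def
proof (intro conjI ballI allI impI)
  show "graded_ids G Bcomp \<subseteq> {p. is_gpoly G p}"
    by (auto simp: graded_ids_def)
  show "pzero \<in> graded_ids G Bcomp"
    by (simp add: graded_ids_def is_gpoly_pzero peval_pzero)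
  fix p assume p: "p \<in> graded_ids G (Bcomp :: 'g \<Rightarrow> ('f, 'n) sqmat set)"
  then have gp: "is_gpoly G p" and fp: "finite (supp p)"
    by (auto simp: graded_ids_def is_gpoly_def)
  show "padd p q \<in> graded_ids G Bcomp" if q: "q \<in> graded_ids G Bcomp" for q
  proof -
    have gq: "is_gpoly G q" and fq: "finite (supp q)"
      using q by (auto simp: graded_ids_def is_gpoly_def)
    show ?thesis
      using p q by (auto simp: graded_ids_def is_gpoly_padd gp gq peval_padd fp fq mzero_def)
  qed
  show "psmult c p \<in> graded_ids G Bcomp" for c
    using p by (auto simp: graded_ids_def is_gpoly_psmult gp peval_psmult fp mzero_def)
  show "pmul q p \<in> graded_ids G Bcomp" "pmul p q \<in> graded_ids G Bcomp" if gq: "is_gpoly G q" for q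
  proof -
    have fq: "finite (supp q)" using gq by (simp add: is_gpoly_def)
    show "pmul q p \<in> graded_ids G Bcomp" "pmul p q \<in> graded_ids G Bcomp"
      using p by (auto simp: graded_ids_def is_gpoly_pmul gp gq peval_pmul fp fq
          mmul_mzero_left mmul_mzero_right)
  qed
  show "psubst \<tau> p \<in> graded_ids G Bcomp" if "graded_subst G \<tau>" for \<tau>
    using p that by (rule psubst_mem_graded_ids)
qed

end

context elementary_unit_span
begin

lemma psub_mon_mem_graded_ids:
  assumes w1: "w1 \<noteq> []" "\<forall>v\<in>set w1. fst v \<in> carrier G"
    and w2: "w2 \<noteq> []" "\<forall>v\<in>set w2. fst v \<in> carrier G"
    and same_end: "\<And>a. word_end a w1 = word_end a w2"
    and same_weight: "\<And>\<sigma> a. graded_assignment \<sigma> \<Longrightarrow> word_end a w1 \<noteq> None \<Longrightarrow>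
      walk_weight \<sigma> a w1 = (walk_weight \<sigma> a w2 :: 'f::field)"
  shows "psub (mon w1) (mon w2) \<in> graded_ids G (Bcomp :: 'g \<Rightarrow> ('f, 'n) sqmat set)"
  unfolding mem_graded_ids_iff
proof (intro conjI allI impI)
  show "is_gpoly G (psub (mon w1) (mon w2) :: ('g, 'f) gpoly)"
    using w1 w2 by (intro is_gpoly_psub is_gpoly_mon)
  fix \<sigma> :: "'g \<times> nat \<Rightarrow> ('f, 'n) sqmat"
  assume \<sigma>: "graded_assignment \<sigma>"
  have "mprod (map \<sigma> w1) i j = mprod (map \<sigma> w2) i j" for i j
    using same_end[of i] same_weight[OF \<sigma>, of i]
    by (simp add: mprod_graded_assignment[OF \<sigma> w1(2)] mprod_graded_assignment[OF \<sigma> w2(2)])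
  then show "peval \<sigma> (psub (mon w1) (mon w2)) = mzero"
    by (simp add: peval_psub peval_mon mzero_def)
qed

lemma comm_identity_mem_graded_ids:
  "psub (mon [(\<one>, 1), (\<one>, 2)]) (mon [(\<one>, 2), (\<one>, 1)])
    \<in> graded_ids G (Bcomp :: 'g \<Rightarrow> ('f::field, 'n) sqmat set)"
  by (rule psub_mon_mem_graded_ids) (auto split: option.splits dest!: step_one simp: mult_ac)

lemma triple_identity_mem_graded_ids:
  assumes h: "h \<in> carrier G"
  shows "psub (mon [(h, 1), (inv h, 2), (h, 3)]) (mon [(h, 3), (inv h, 2), (h, 1)])
    \<in> graded_ids G (Bcomp :: 'g \<Rightarrow> ('f::field, 'n) sqmat set)"
proof (rule psub_mon_mem_graded_ids)
  fix \<sigma> :: "'g \<times> nat \<Rightarrow> ('f, 'n) sqmat" and a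
  show "walk_weight \<sigma> a [(h, 1), (inv h, 2), (h, 3)] = walk_weight \<sigma> a [(h, 3), (inv h, 2), (h, 1)]"
  proof (cases "step a h")
    case b: (Some b)
    show ?thesis
    proof (cases "step b (inv h)")
      case (Some c)
      with b have "c = a" by (rule step_inv)
      with Some b show ?thesis by (simp add: mult_ac)
    qed (simp add: b)
  qed simp
qed (use h in auto)

lemma variable_mem_graded_ids:
  assumes h: "h \<in> carrier G" and zero: "Bcomp h = {mzero :: ('f::field, 'n) sqmat}"
  shows "mon [(h, 1)] \<in> graded_ids G (Bcomp :: 'g \<Rightarrow> ('f, 'n) sqmat set)"
  unfolding mem_graded_ids_iff
proof (intro conjI allI impI)
  show "is_gpoly G (mon [(h, 1)] :: ('g, 'f) gpoly)"
    using h by (intro is_gpoly_mon) auto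
  fix \<sigma> :: "'g \<times> nat \<Rightarrow> ('f, 'n) sqmat"
  assume "graded_assignment \<sigma>"
  then have "\<sigma> (h, 1) = mzero" using h zero by (auto simp: graded_assignment_def)
  then show "peval \<sigma> (mon [(h, 1)]) = mzero" by (simp add: peval_mon mmul_mid_right)
qed

lemma mlmon_mem_graded_ids:
  assumes no_walk: "\<And>c. walk_end c hs = None" and hs: "hs \<noteq> []" "set hs \<subseteq> carrier G"
  shows "mlmon hs \<in> graded_ids G (Bcomp :: 'g \<Rightarrow> ('f::field, 'n) sqmat set)"
proof -
  define w where "w = zip hs [1..<length hs + 1]"
  have "length hs = length [1..<length hs + 1]" by (simp only: length_upt)
  then have fst_w: "map fst w = hs"
    unfolding w_def by (rule map_fst_zip)
  then have "w \<noteq> []" "\<forall>v\<in>set w. fst v \<in> carrier G"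
    using hs by force+
  then show ?thesis
    unfolding mlmon_def w_def[symmetric] mem_graded_ids_iff
    using no_walk fst_w
    by (auto intro!: is_gpoly_mon ext simp: peval_mon mprod_graded_assignment mzero_def)
qed

definition deg_set :: "'g set" where
  "deg_set = (\<lambda>(a, b). inv (gs a) \<otimes> gs b) ` UNIV"

lemma finite_deg_set: "finite deg_set"
  by (simp add: deg_set_def)

lemma step_deg_set: "step c h = Some d \<Longrightarrow> h \<in> deg_set"
  by (auto simp: deg_set_def step_eq_Some_iff)

lemma deg_set_subset_carrier: "deg_set \<subseteq> carrier G"
  using gs_closed by (auto simp: deg_set_def)

definition basic_identities :: "('g, 'f::field) gpoly set" where
  "basic_identities =
    (if (Bcomp \<one> :: ('f, 'n) sqmat set) \<noteq> {mzero}
     then {psub (mon [(\<one>, 1), (\<one>, 2)]) (mon [(\<one>, 2), (\<one>, 1)])} else {})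
    \<union> {psub (mon [(h, 1), (inv h, 2), (h, 3)]) (mon [(h, 3), (inv h, 2), (h, 1)])
       | h. h \<in> carrier G \<and> h \<noteq> \<one> \<and> (Bcomp h :: ('f, 'n) sqmat set) \<noteq> {mzero}}
    \<union> {mon [(h, 1)] | h. h \<in> carrier G \<and> (Bcomp h :: ('f, 'n) sqmat set) = {mzero}}"

definition short_monomial_identities :: "('g, 'f::field) gpoly set" where
  "short_monomial_identities =
    {mlmon hs | hs. set hs \<subseteq> deg_set \<and> 2 \<le> length hs \<and> length hs \<le> 2 * card (UNIV :: 'n set) - 1 \<and>
       mlmon hs \<in> graded_ids G (Bcomp :: 'g \<Rightarrow> ('f, 'n) sqmat set)}"

lemma basic_identities_subset_graded_ids:
  "basic_identities \<subseteq> graded_ids G (Bcomp :: 'g \<Rightarrow> ('f::field, 'n) sqmat set)"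
  using comm_identity_mem_graded_ids triple_identity_mem_graded_ids variable_mem_graded_ids
  by (auto simp: basic_identities_def)

lemma short_monomial_identities_subset_graded_ids:
  "short_monomial_identities \<subseteq> graded_ids G (Bcomp :: 'g \<Rightarrow> ('f::field, 'n) sqmat set)"
  by (auto simp: short_monomial_identities_def)

end

section \<open>Words with the same walk are congruent modulo the identities\<close>

context elementary_unit_span
begin

lemma swap_closed_walks:
  assumes "word_end a u1 = Some a" "word_end a u2 = Some a"
  shows "word_end a (u2 @ u1 @ v) = word_end a (u1 @ u2 @ v)"
    and "walk_edges a (u2 @ u1 @ v) = walk_edges a (u1 @ u2 @ v)"
  using assms by (simp_all add: walk_end_append walk_edges_append ac_simps)

lemma swap_outer_walks:
  assumes "word_end a u1 = Some b" "word_end b u2 = Some a" "word_end a u3 = Some b"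
  shows "word_end a (u3 @ u2 @ u1 @ v) = word_end a (u1 @ u2 @ u3 @ v)"
    and "walk_edges a (u3 @ u2 @ u1 @ v) = walk_edges a (u1 @ u2 @ u3 @ v)"
  using assms by (simp_all add: walk_end_append walk_edges_append ac_simps)

text \<open>If a word starts with a closed walk P at a, and another word with the same edges starts with
  the letter following P, then the rest of the first word must return to a vertex visited by P:
  otherwise the second word, once it has left P's vertices, could never use P's first edge.\<close>

lemma closed_prefix_revisited:
  assumes P: "word_end a P = Some a" "P \<noteq> []"
    and w': "word_end a (l # r) \<noteq> None" "walk_edges a (l # r) = walk_edges a (P @ l # \<beta>)"
  shows "\<exists>x\<in>#walk_edges a (l # \<beta>). snd (snd x) \<in> (\<lambda>x. fst (snd x)) ` set_mset (walk_edges a P)"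
proof (rule ccontr)
  define V where "V = (\<lambda>x. fst (snd x)) ` set_mset (walk_edges a P)"
  assume "\<not> ?thesis"
  then have outside: "\<forall>x\<in>#walk_edges a (l # \<beta>). snd (snd x) \<notin> V"
    by (simp add: V_def)
  obtain d where d: "step a (fst l) = Some d"
    using w' by (auto split: option.splits)
  obtain m P' e where m: "P = m # P'" "step a (fst m) = Some e"
    using P by (cases P) (auto split: option.splits)
  have first_edge: "(m, a, e) \<in># walk_edges a P" and "a \<in> V"
    using m by (force simp: V_def)+
  have "d \<notin> V" using outside d by simp
  have r_edges: "walk_edges d r = walk_edges a P + walk_edges d \<beta>"
    using w'(2) d walk_edges_append[OF P(1)] by simp
  have "\<forall>x\<in>#walk_edges d r. fst (snd x) \<notin> V"
  proof (rule walk_edges_avoid[OF _ \<open>d \<notin> V\<close> subset_mset.order_refl])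
    show "word_end d r \<noteq> None" using w'(1) d by simp
    fix x assume "x \<in># walk_edges d r" "fst (snd x) \<notin> V"
    then have "x \<in># walk_edges d \<beta>" using r_edges by (force simp: V_def)
    then show "snd (snd x) \<notin> V" using outside d by simp
  qed
  moreover have "(m, a, e) \<in># walk_edges d r" using first_edge r_edges by simp
  ultimately show False using \<open>a \<in> V\<close> by force
qed

end

locale basis_ideal = elementary_unit_span G gs S
  for G (structure) and gs :: "'n::finite \<Rightarrow> 'g" and S +
  fixes J :: "('g, 'f::field) gpoly set"
  assumes TG_ideal_J: "TG_ideal G J"
    and basic_identities_in_J: "basic_identities \<subseteq> J"
    and short_monomial_identities_in_J: "short_monomial_identities \<subseteq> J"
begin

lemma pzero_in_J: "pzero \<in> J"
  using TG_ideal_J by (simp add: TG_ideal_def)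

lemma padd_in_J: "p \<in> J \<Longrightarrow> q \<in> J \<Longrightarrow> padd p q \<in> J"
  using TG_ideal_J by (simp add: TG_ideal_def)

lemma psmult_in_J: "p \<in> J \<Longrightarrow> psmult c p \<in> J"
  using TG_ideal_J by (simp add: TG_ideal_def)

lemma pmul_left_in_J: "p \<in> J \<Longrightarrow> is_gpoly G q \<Longrightarrow> pmul q p \<in> J"
  using TG_ideal_J by (simp add: TG_ideal_def)

lemma pmul_right_in_J: "p \<in> J \<Longrightarrow> is_gpoly G q \<Longrightarrow> pmul p q \<in> J"
  using TG_ideal_J by (simp add: TG_ideal_def)

lemma psubst_in_J: "p \<in> J \<Longrightarrow> graded_subst G \<tau> \<Longrightarrow> psubst \<tau> p \<in> J"
  using TG_ideal_J by (simp add: TG_ideal_def)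

lemma psub_in_J: "p \<in> J \<Longrightarrow> q \<in> J \<Longrightarrow> psub p q \<in> J"
  using padd_in_J[OF _ psmult_in_J, of p q "-1"]
  by (simp add: padd_def psmult_def psub_def)

lemma sum_in_J: "finite K \<Longrightarrow> (\<And>k. k \<in> K \<Longrightarrow> f k \<in> J) \<Longrightarrow> (\<lambda>u. \<Sum>k\<in>K. f k u) \<in> J"
proof (induction K rule: finite_induct)
  case empty
  then show ?case using pzero_in_J by (simp add: pzero_def)
next
  case (insert k K)
  then have "padd (f k) (\<lambda>u. \<Sum>k\<in>K. f k u) \<in> J" by (intro padd_in_J) auto
  then show ?case using insert by (simp add: padd_def)
qed

lemma comm_identity_in_J:
  assumes "step a \<one> = Some b"
  shows "psub (mon [(\<one>, 1), (\<one>, 2)]) (mon [(\<one>, 2), (\<one>, 1)]) \<in> J"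
proof -
  have "(Bcomp \<one> :: ('f, 'n) sqmat set) \<noteq> {mzero}" using assms by (rule Bcomp_nonzero)
  then show ?thesis using basic_identities_in_J by (auto simp: basic_identities_def)
qed

lemma triple_identity_in_J:
  assumes "h \<noteq> \<one>" "step a h = Some b"
  shows "psub (mon [(h, 1), (inv h, 2), (h, 3)]) (mon [(h, 3), (inv h, 2), (h, 1)]) \<in> J"
proof -
  have "(Bcomp h :: ('f, 'n) sqmat set) \<noteq> {mzero}" using assms(2) by (rule Bcomp_nonzero)
  moreover have "h \<in> carrier G" using assms(2) by (rule step_closed)
  ultimately show ?thesis
    using assms(1) basic_identities_in_J unfolding basic_identities_def by blast
qed

lemma variable_in_J:
  assumes "h \<in> carrier G" "\<And>a. step a h = None"
  shows "mon [(h, 1)] \<in> J"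
proof -
  have "(Bcomp h :: ('f, 'n) sqmat set) = {mzero}" using assms(2) by (rule Bcomp_zero)
  then show ?thesis using assms(1) basic_identities_in_J by (auto simp: basic_identities_def)
qed

lemma mon_context_in_J:
  assumes "mon x \<in> J" "\<forall>v\<in>set \<alpha>. fst v \<in> carrier G" "\<forall>v\<in>set \<beta>. fst v \<in> carrier G"
  shows "mon (\<alpha> @ x @ \<beta>) \<in> J"
proof -
  have "mon (\<alpha> @ x) \<in> J"
    using assms pmul_left_in_J[of "mon x" "mon \<alpha>"]
    by (cases "\<alpha> = []") (auto simp: pmul_mon_mon intro: is_gpoly_mon)
  then show ?thesis
    using assms pmul_right_in_J[of "mon (\<alpha> @ x)" "mon \<beta>"]
    by (cases "\<beta> = []") (auto simp: pmul_mon_mon intro: is_gpoly_mon)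
qed

lemma psub_mon_context_in_J:
  assumes "psub (mon x) (mon y) \<in> J" "\<forall>v\<in>set \<alpha>. fst v \<in> carrier G" "\<forall>v\<in>set \<beta>. fst v \<in> carrier G"
  shows "psub (mon (\<alpha> @ x @ \<beta>)) (mon (\<alpha> @ y @ \<beta>)) \<in> J"
proof -
  have "psub (mon (\<alpha> @ x)) (mon (\<alpha> @ y)) \<in> J"
    using assms pmul_left_in_J[of "psub (mon x) (mon y)" "mon \<alpha>"]
    by (cases "\<alpha> = []") (auto simp: pmul_psub_right pmul_mon_mon intro: is_gpoly_mon)
  then show ?thesis
    using assms pmul_right_in_J[of "psub (mon (\<alpha> @ x)) (mon (\<alpha> @ y))" "mon \<beta>"]
    by (cases "\<beta> = []") (auto simp: pmul_psub_left pmul_mon_mon intro: is_gpoly_mon)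
qed

lemma swap_closed_walks_in_J:
  assumes u1: "word_end a u1 = Some a" "u1 \<noteq> []" and u2: "word_end a u2 = Some a" "u2 \<noteq> []"
    and v: "\<forall>x\<in>set v. fst x \<in> carrier G"
  shows "psub (mon (u1 @ u2 @ v)) (mon (u2 @ u1 @ v)) \<in> J"
proof -
  have "step a \<one> = Some a"
    using walk_end_in_S[of a "map fst u1"] u1 gs_closed by (simp add: step_eq_Some_iff)
  then have comm: "psub (mon [(\<one>, 1), (\<one>, 2)]) (mon [(\<one>, 2), (\<one>, 1)]) \<in> J"
    by (rule comm_identity_in_J)
  define f where "f = (\<lambda>x. if x = (\<one>, 1::nat) then u1 else if x = (\<one>, 2) then u2 else [x])"
  have "gprod G (map fst u1) = \<one>" "gprod G (map fst u2) = \<one>"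
    using walk_end_degree[OF u1(1)] walk_end_degree[OF u2(1)] gs_closed by simp_all
  then have "graded_subst G (\<lambda>x. mon (f x) :: ('g, 'f) gpoly)"
    using u1 u2 word_end_closed by (intro graded_subst_mon) (auto simp: f_def)
  from psubst_in_J[OF comm this] have "psub (mon (u1 @ u2)) (mon (u2 @ u1)) \<in> J"
    by (subst (asm) psubst_psub_mon) (auto simp: f_def)
  from psub_mon_context_in_J[OF this _ v, of "[]"] show ?thesis by simp
qed

lemma swap_outer_walks_in_J:
  assumes ab: "a \<noteq> b"
    and u: "word_end a u1 = Some b" "word_end b u2 = Some a" "word_end a u3 = Some b"
    and v: "\<forall>x\<in>set v. fst x \<in> carrier G"
  shows "psub (mon (u1 @ u2 @ u3 @ v)) (mon (u3 @ u2 @ u1 @ v)) \<in> J"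
proof -
  define h where "h = inv (gs a) \<otimes> gs b"
  have nonempty: "u1 \<noteq> []" "u2 \<noteq> []" "u3 \<noteq> []"
    using u ab by auto
  then have "step a h = Some b"
    using walk_end_in_S u by (simp add: step_eq_Some_iff h_def)
  moreover have "h \<noteq> \<one>"
    using ab gs_closed inv_gs_mult_cancel_right[of a b a] by (auto simp: h_def)
  ultimately have triple:
    "psub (mon [(h, 1), (inv h, 2), (h, 3)]) (mon [(h, 3), (inv h, 2), (h, 1)]) \<in> J"
    by (intro triple_identity_in_J)
  define f where "f = (\<lambda>x. if x = (h, 1::nat) then u1 else if x = (inv h, 2) then u2
    else if x = (h, 3) then u3 else [x])"
  have "gprod G (map fst u1) = h" "gprod G (map fst u3) = h"
    using walk_end_degree[OF u(1)] walk_end_degree[OF u(3)] by (simp_all add: h_def)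
  moreover have "gprod G (map fst u2) = inv h"
    using walk_end_degree[OF u(2)] gs_closed by (simp add: h_def inv_mult_group)
  ultimately have "graded_subst G (\<lambda>x. mon (f x) :: ('g, 'f) gpoly)"
    using nonempty u word_end_closed by (intro graded_subst_mon) (auto simp: f_def)
  from psubst_in_J[OF triple this] have "psub (mon (u1 @ u2 @ u3)) (mon (u3 @ u2 @ u1)) \<in> J"
    by (subst (asm) psubst_psub_mon) (auto simp: f_def)
  from psub_mon_context_in_J[OF this _ v, of "[]"] show ?thesis by simp
qed

end

context basis_ideal
begin

lemma move_segment_to_front:
  assumes P: "word_end a P = Some a" "P \<noteq> []"
    and w: "word_end a (P @ Q) \<noteq> None"
    and x: "x \<in># walk_edges a Q" "snd (snd x) \<in> (\<lambda>y. fst (snd y)) ` set_mset (walk_edges a P)"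
  obtains w'' where "psub (mon (P @ Q)) (mon w'') \<in> J" "hd w'' = hd Q"
    "word_end a w'' = word_end a (P @ Q)" "walk_edges a w'' = walk_edges a (P @ Q)"
proof -
  define t where "t = snd (snd x)"
  obtain u v where Q: "Q = u @ fst x # v" and u: "word_end a u = Some (fst (snd x))"
    and last: "step (fst (snd x)) (fst (fst x)) = Some t"
    using walk_edges_split[OF x(1)] by (auto simp: t_def)
  define u3 where "u3 = u @ [fst x]"
  have u3: "word_end a u3 = Some t" "u3 \<noteq> []" "hd u3 = hd Q" and Q3: "Q = u3 @ v"
    using u last Q by (auto simp: u3_def walk_end_append hd_append)
  obtain y where y: "y \<in># walk_edges a P" "fst (snd y) = t"
    using x(2) by (auto simp: t_def)
  obtain u1 v' where P1: "P = u1 @ fst y # v'" and u1: "word_end a u1 = Some t"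
    using walk_edges_split[OF y(1)] y(2) by auto
  define u2 where "u2 = fst y # v'"
  have u2: "word_end t u2 = Some a" and P12: "P = u1 @ u2"
    using P(1) P1 u1 by (simp_all add: u2_def walk_end_append)
  have v: "\<forall>z\<in>set v. fst z \<in> carrier G"
    using w word_end_closed Q3 by (fastforce simp: walk_end_append split: option.splits)
  show ?thesis
  proof (cases "t = a")
    case True
    show ?thesis
    proof (rule that[of "u3 @ P @ v"])
      show "psub (mon (P @ Q)) (mon (u3 @ P @ v)) \<in> J"
        using swap_closed_walks_in_J[OF P(1,2)] u3 True v Q3 by simp
      show "word_end a (u3 @ P @ v) = word_end a (P @ Q)"
        "walk_edges a (u3 @ P @ v) = walk_edges a (P @ Q)"
        using swap_closed_walks[OF P(1)] u3 True Q3 by simp_all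
    qed (use u3 in simp)
  next
    case False
    show ?thesis
    proof (rule that[of "u3 @ u2 @ u1 @ v"])
      show "psub (mon (P @ Q)) (mon (u3 @ u2 @ u1 @ v)) \<in> J"
        using swap_outer_walks_in_J[OF False[symmetric] u1 u2 u3(1) v] P12 Q3 by simp
      show "word_end a (u3 @ u2 @ u1 @ v) = word_end a (P @ Q)"
        "walk_edges a (u3 @ u2 @ u1 @ v) = walk_edges a (P @ Q)"
        using swap_outer_walks[OF u1 u2 u3(1)] P12 Q3 by simp_all
    qed (use u3 in simp)
  qed
qed

lemma congruent_word_with_head:
  assumes w: "word_end a w \<noteq> None" "w \<noteq> []"
    and w': "word_end a (l' # r') \<noteq> None" "walk_edges a (l' # r') = walk_edges a w"
  obtains w'' where "psub (mon w) (mon w'') \<in> J" "hd w'' = l'"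
    "word_end a w'' = word_end a w" "walk_edges a w'' = walk_edges a w"
proof (cases "hd w = l'")
  case True
  then show ?thesis using that[of w] pzero_in_J by (simp add: psub_self)
next
  case False
  obtain d where "step a (fst l') = Some d"
    using w' by (auto split: option.splits)
  then have "(l', a, d) \<in># walk_edges a (l' # r')" by simp
  then have "(l', a, d) \<in># walk_edges a w" using w'(2) by simp
  then obtain P \<beta> where P: "w = P @ l' # \<beta>" "word_end a P = Some a"
    using walk_edges_split by fastforce
  have "P \<noteq> []" using P False by auto
  moreover have "walk_edges a (l' # r') = walk_edges a (P @ l' # \<beta>)" using w'(2) P(1) by simp
  ultimately obtain x where "x \<in># walk_edges a (l' # \<beta>)"
    "snd (snd x) \<in> (\<lambda>y. fst (snd y)) ` set_mset (walk_edges a P)"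
    using closed_prefix_revisited[OF P(2) _ w'(1)] by blast
  with move_segment_to_front obtain w'' where "psub (mon w) (mon w'') \<in> J" "hd w'' = l'"
    "word_end a w'' = word_end a w" "walk_edges a w'' = walk_edges a w"
    using P \<open>P \<noteq> []\<close> w(1) by (metis list.sel(1))
  then show ?thesis by (rule that)
qed

lemma psub_mon_in_J_if_same_walk_edges:
  "word_end a w \<noteq> None \<Longrightarrow> word_end a w' \<noteq> None \<Longrightarrow> walk_edges a w = walk_edges a w' \<Longrightarrow>
    w \<noteq> [] \<Longrightarrow> psub (mon w) (mon w') \<in> J"
proof (induction "length w" arbitrary: a w w' rule: less_induct)
  case less
  have same_head: "psub (mon w1) (mon w') \<in> J"
    if len: "length w1 = length w" and e1: "word_end a w1 \<noteq> None"
      and edges: "walk_edges a w1 = walk_edges a w'" and hd: "hd w1 = hd w'" for w1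
  proof -
    have "length w1 = length w'"
      using e1 less.prems(2) edges size_walk_edges[of a w1] size_walk_edges[of a w'] by simp
    then obtain l r1 r2 where w12: "w1 = l # r1" "w' = l # r2"
      using hd len less.prems(4) by (cases w1; cases w') auto
    then obtain b where b: "step a (fst l) = Some b"
      using e1 by (auto split: option.splits)
    show ?thesis
    proof (cases "r1 = []")
      case True
      then show ?thesis
        using w12 \<open>length w1 = length w'\<close> pzero_in_J by (simp add: psub_self)
    next
      case False
      then have "psub (mon r1) (mon r2) \<in> J"
        using less.hyps[of r1 b r2] len e1 less.prems(2) edges w12 b by simp
      from psub_mon_context_in_J[OF this, of "[l]" "[]"] step_closed[OF b] show ?thesis
        using w12 by simp
    qed
  qed
  obtain l' r' where w': "w' = l' # r'"
    using less.prems size_walk_edges[of a w] size_walk_edges[of a w'] by (cases w') auto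
  then have "word_end a (l' # r') \<noteq> None" "walk_edges a (l' # r') = walk_edges a w"
    using less.prems(2,3) by simp_all
  then obtain w'' where w'': "psub (mon w) (mon w'') \<in> J" "hd w'' = l'"
    "word_end a w'' = word_end a w" "walk_edges a w'' = walk_edges a w"
    by (rule congruent_word_with_head[OF less.prems(1,4)])
  have "length w'' = length w"
    using w''(3,4) less.prems(1) size_walk_edges[of a w] size_walk_edges[of a w''] by simp
  then have "psub (mon w'') (mon w') \<in> J"
    using same_head w'' less.prems w' by simp
  from padd_in_J[OF w''(1) this] show ?case by (simp add: padd_psub_psub)
qed

end

section \<open>Words without walks are consequences of short monomial identities\<close>

context elementary_unit_span
begin

definition reach :: "'n set \<Rightarrow> 'g list \<Rightarrow> 'n set" where
  "reach D hs = {c. \<exists>a\<in>D. walk_end a hs = Some c}"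

lemma reach_Nil [simp]: "reach D [] = D"
  by (auto simp: reach_def)

lemma reach_append: "reach D (xs @ ys) = reach (reach D xs) ys"
  by (auto simp: reach_def walk_end_append split: option.splits)

lemma reach_eq_image: "reach D hs = (\<lambda>a. the (walk_end a hs)) ` {a\<in>D. walk_end a hs \<noteq> None}"
  by (force simp: reach_def)

lemma card_reach_less:
  assumes "c \<in> D" "walk_end c hs = None"
  shows "card (reach D hs) < card D"
proof -
  have "card (reach D hs) \<le> card {a\<in>D. walk_end a hs \<noteq> None}"
    unfolding reach_eq_image by (rule card_image_le) simp
  also have "\<dots> < card D"
  proof (rule psubset_card_mono)
    show "{a\<in>D. walk_end a hs \<noteq> None} \<subset> D" using assms by blast
  qed simp
  finally show ?thesis .
qed

lemma reach_UNIV_if_total: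
  assumes "\<And>c. walk_end c hs \<noteq> None"
  shows "reach UNIV hs = UNIV"
proof -
  have "inj_on (\<lambda>a. the (walk_end a hs)) {a. walk_end a hs \<noteq> None}"
    by (rule inj_onI) (auto intro: walk_end_inj)
  then have "card (reach UNIV hs) = card (UNIV :: 'n set)"
    using assms by (simp add: reach_eq_image card_image)
  then show ?thesis by (intro card_subset_eq) auto
qed

lemma reach_gprod:
  assumes "\<And>c. c \<in> D \<Longrightarrow> walk_end c hs \<noteq> None" "hs \<noteq> []"
  shows "reach D [gprod G hs] = reach D hs"
  using assms walk_end_gprod by (fastforce simp: reach_def)

definition block_degs :: "('g \<times> nat) list list \<Rightarrow> 'g list" where
  "block_degs bs = map (\<lambda>b. gprod G (map fst b)) bs"

text \<open>The invariant of a left-to-right scan of w: each block of bs has the degree of a matrix unit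
  of B, and the blocks reach the same vertices as the prefix x @ concat bs. When a reachable vertex
  gets stuck on the next letter, the pending tail y and that letter become two new blocks and the
  set of reachable vertices shrinks; this yields the length bound.\<close>

definition block_decomposition ::
    "('g \<times> nat) list \<Rightarrow> ('g \<times> nat) list \<Rightarrow> ('g \<times> nat) list list \<Rightarrow> ('g \<times> nat) list \<Rightarrow> bool" where
  "block_decomposition w x bs y \<longleftrightarrow> w = x @ concat bs @ y \<and>
    (\<forall>b\<in>set bs. b \<noteq> [] \<and> (\<exists>c d. step c (gprod G (map fst b)) = Some d)) \<and>
    reach UNIV (block_degs bs) = reach UNIV (map fst (x @ concat bs)) \<and>
    (\<forall>c\<in>reach UNIV (block_degs bs). word_end c y \<noteq> None) \<and>
    (bs \<noteq> [] \<longrightarrow> length bs + 1 \<le> 2 * (card (UNIV :: 'n set) - card (reach UNIV (block_degs bs))))"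

lemma block_decomposition_first_block:
  assumes dec: "block_decomposition w x [] y"
    and l: "step c (fst l) = Some d" and stuck: "word_end c0 (y @ [l]) = None"
  shows "block_decomposition (w @ [l]) (x @ y) [[l]] []"
proof -
  have lc: "fst l \<in> carrier G" using l by (rule step_closed)
  have "reach UNIV (map fst x) = UNIV" "reach UNIV (map fst y) = UNIV"
    using dec reach_UNIV_if_total[of "map fst y"]
    by (auto simp: block_decomposition_def block_degs_def)
  moreover have "card (reach UNIV (map fst (y @ [l]))) < card (UNIV :: 'n set)"
    using stuck by (intro card_reach_less[of c0]) auto
  ultimately show ?thesis
    using dec l lc by (auto simp: block_decomposition_def block_degs_def reach_append)
qed

lemma block_decomposition_close_blocks:
  assumes dec: "block_decomposition w x bs y" and bs: "bs \<noteq> []"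
    and l: "step c (fst l) = Some d"
    and c0: "c0 \<in> reach UNIV (block_degs bs)" "word_end c0 (y @ [l]) = None"
  shows "block_decomposition (w @ [l]) x (bs @ (if y = [] then [] else [y]) @ [[l]]) []"
proof -
  define R where "R = reach UNIV (block_degs bs)"
  define yb where "yb = (if y = [] then [] else [y])"
  have w: "w = x @ concat bs @ y"
    and blocks: "\<forall>b\<in>set bs. b \<noteq> [] \<and> (\<exists>c d. step c (gprod G (map fst b)) = Some d)"
    and prefix: "R = reach UNIV (map fst (x @ concat bs))"
    and y: "\<forall>c\<in>R. word_end c y \<noteq> None"
    and len: "length bs + 1 \<le> 2 * (card (UNIV :: 'n set) - card R)"
    using dec bs unfolding block_decomposition_def R_def by blast+
  have lc: "fst l \<in> carrier G" using l by (rule step_closed)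
  have y_block: "\<exists>c d. step c (gprod G (map fst y)) = Some d" if "y \<noteq> []"
  proof -
    obtain d where "word_end c0 y = Some d" using y c0 by (auto simp: R_def)
    then have "walk_end c0 [gprod G (map fst y)] = Some d" using that by (intro walk_end_gprod) auto
    then show ?thesis by (auto split: option.splits)
  qed
  have "reach R (block_degs yb) = reach R (map fst y)"
    using reach_gprod[of R "map fst y"] y by (auto simp: yb_def block_degs_def)
  then have new_reach: "reach UNIV (block_degs (bs @ yb @ [[l]])) = reach R (map fst (y @ [l]))"
    using lc by (simp add: block_degs_def reach_append R_def)
  moreover have "card (reach R (map fst (y @ [l]))) < card R"
    using c0 by (intro card_reach_less[of c0]) (auto simp: R_def)
  moreover have "card R \<le> card (UNIV :: 'n set)" by (simp add: card_mono)
  moreover have "length yb \<le> 1" by (simp add: yb_def)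
  ultimately have "length (bs @ yb @ [[l]]) + 1 \<le>
      2 * (card (UNIV :: 'n set) - card (reach UNIV (block_degs (bs @ yb @ [[l]]))))"
    using len by simp
  moreover have "reach UNIV (map fst (x @ concat (bs @ yb @ [[l]]))) = reach R (map fst (y @ [l]))"
    using prefix by (simp add: yb_def reach_append)
  ultimately show ?thesis
    unfolding yb_def[symmetric] block_decomposition_def
    using w blocks y_block l lc new_reach by (auto simp: yb_def)
qed

lemma block_decomposition_exists:
  assumes "\<forall>l\<in>set w. \<exists>c d. step c (fst l) = Some d"
  shows "\<exists>x bs y. block_decomposition w x bs y"
  using assms
proof (induction w rule: rev_induct)
  case Nil
  have "block_decomposition [] [] [] []" by (simp add: block_decomposition_def block_degs_def)
  then show ?case by blast
next
  case (snoc l w)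
  then obtain x bs y where dec: "block_decomposition w x bs y" by auto
  obtain c d where l: "step c (fst l) = Some d" using snoc.prems by auto
  show ?case
  proof (cases "\<forall>c\<in>reach UNIV (block_degs bs). word_end c (y @ [l]) \<noteq> None")
    case True
    have "w @ [l] = x @ concat bs @ (y @ [l])"
      using dec by (simp add: block_decomposition_def)
    with dec True have "block_decomposition (w @ [l]) x bs (y @ [l])"
      unfolding block_decomposition_def by blast
    then show ?thesis by blast
  next
    case False
    then obtain c0 where c0: "c0 \<in> reach UNIV (block_degs bs)" "word_end c0 (y @ [l]) = None"
      by auto
    then show ?thesis
      using dec block_decomposition_first_block[OF _ l]
        block_decomposition_close_blocks[OF dec _ l c0]
      by (cases "bs = []") blast+
  qed
qed

end

context elementary_unit_span
begin

lemma block_degs_short: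
  assumes dec: "block_decomposition w x bs y" and no_walk: "\<And>c. word_end c w = None"
  shows "\<And>c. walk_end c (block_degs bs) = None"
    and "2 \<le> length (block_degs bs)"
    and "length (block_degs bs) \<le> 2 * card (UNIV :: 'n set) - 1"
    and "set (block_degs bs) \<subseteq> deg_set"
proof -
  have w: "w = x @ concat bs @ y"
    and blocks: "\<forall>b\<in>set bs. b \<noteq> [] \<and> (\<exists>c d. step c (gprod G (map fst b)) = Some d)"
    and prefix: "reach UNIV (block_degs bs) = reach UNIV (map fst (x @ concat bs))"
    and y: "\<forall>c\<in>reach UNIV (block_degs bs). word_end c y \<noteq> None"
    and len: "bs \<noteq> [] \<longrightarrow>
      length bs + 1 \<le> 2 * (card (UNIV :: 'n set) - card (reach UNIV (block_degs bs)))"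
    using dec unfolding block_decomposition_def by blast+
  have empty: "reach UNIV (block_degs bs) = {}"
  proof (rule ccontr)
    assume "reach UNIV (block_degs bs) \<noteq> {}"
    then obtain a c d where "walk_end a (map fst (x @ concat bs)) = Some c" "word_end c y = Some d"
      using prefix y by (force simp: reach_def)
    then have "word_end a w = Some d" by (auto simp: w walk_end_append split: option.splits)
    with no_walk show False by simp
  qed
  then show no_walk_degs: "walk_end c (block_degs bs) = None" for c
    by (cases "walk_end c (block_degs bs)") (auto simp: reach_def)
  then have "bs \<noteq> []" by (auto simp: block_degs_def)
  then show "length (block_degs bs) \<le> 2 * card (UNIV :: 'n set) - 1"
    using len empty by (simp add: block_degs_def)
  show "2 \<le> length (block_degs bs)"
  proof (rule ccontr)
    assume "\<not> 2 \<le> length (block_degs bs)"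
    moreover have "length bs > 0" using \<open>bs \<noteq> []\<close> by simp
    ultimately have "length bs = 1" unfolding block_degs_def length_map by linarith
    then obtain b where "bs = [b]" by (auto simp: length_Suc_conv)
    moreover obtain c d where "step c (gprod G (map fst b)) = Some d"
      using blocks \<open>bs = [b]\<close> by auto
    ultimately have "walk_end c (block_degs bs) = Some d"
      by (simp add: block_degs_def)
    with no_walk_degs show False by simp
  qed
  show "set (block_degs bs) \<subseteq> deg_set"
    using blocks step_deg_set by (auto simp: block_degs_def)
qed

end

context basis_ideal
begin

lemma mon_in_J_if_letter_without_step:
  assumes l: "l \<in> set w" "\<And>c. step c (fst l) = None" and w: "\<forall>v\<in>set w. fst v \<in> carrier G"
  shows "mon w \<in> J"
proof -
  obtain \<alpha> \<beta> where split: "w = \<alpha> @ l # \<beta>" using split_list[OF l(1)] by blast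
  define h where "h = fst l"
  have h: "h \<in> carrier G" using w l by (simp add: h_def)
  define f where "f = (\<lambda>v. if v = (h, 1::nat) then [l] else [v])"
  have "graded_subst G (\<lambda>v. mon (f v) :: ('g, 'f) gpoly)"
    using h by (intro graded_subst_mon) (auto simp: f_def h_def)
  moreover have "mon [(h, 1)] \<in> J"
    using h l(2) by (intro variable_in_J) (auto simp: h_def)
  ultimately have "mon [l] \<in> J"
    using psubst_in_J by (fastforce simp: psubst_mon f_def)
  from mon_context_in_J[OF this, of \<alpha> \<beta>] w split show ?thesis by auto
qed

lemma mon_concat_in_J:
  assumes hs: "mlmon (block_degs bs) \<in> J"
    and bs: "\<forall>b\<in>set bs. b \<noteq> [] \<and> (\<forall>v\<in>set b. fst v \<in> carrier G)"
  shows "mon (concat bs) \<in> J"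
proof -
  define hs where "hs = block_degs bs"
  have len: "length hs = length bs" by (simp add: hs_def block_degs_def)
  define f where "f = (\<lambda>v. if 1 \<le> snd v \<and> snd v \<le> length hs \<and> fst v = hs ! (snd v - 1)
    then bs ! (snd v - 1) else [v])"
  have "graded_subst G (\<lambda>v. mon (f v) :: ('g, 'f) gpoly)"
  proof (rule graded_subst_mon)
    fix h i assume "h \<in> carrier G"
    show "f (h, i) \<noteq> [] \<and> (\<forall>v\<in>set (f (h, i)). fst v \<in> carrier G) \<and> gprod G (map fst (f (h, i))) = h"
    proof (cases "1 \<le> i \<and> i \<le> length hs \<and> h = hs ! (i - 1)")
      case True
      then have "i - 1 < length bs" using len by arith
      then show ?thesis using True bs by (auto simp: f_def hs_def block_degs_def)
    qed (use \<open>h \<in> carrier G\<close> in \<open>auto simp: f_def\<close>)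
  qed
  from psubst_in_J[OF hs[folded hs_def] this]
  have "mon (concat (map f (zip hs [1..<length hs + 1]))) \<in> J"
    by (simp add: mlmon_def psubst_mon)
  moreover have "map f (zip hs [1..<length hs + 1]) = bs"
    by (rule nth_equalityI) (auto simp del: upt_Suc simp: f_def len)
  ultimately show ?thesis by simp
qed

text \<open>If no walk follows w, either some letter of w labels no edge at all, and w is a consequence
  of a generator of type (iii), or the block decomposition of w is a substitution instance of a
  short monomial identity.\<close>

lemma mon_in_J_if_no_walk:
  assumes w: "w \<noteq> []" "\<forall>v\<in>set w. fst v \<in> carrier G" and no_walk: "\<And>c. word_end c w = None"
  shows "mon w \<in> J"
proof (cases "\<exists>l\<in>set w. \<forall>c. step c (fst l) = None")
  case True
  then show ?thesis using mon_in_J_if_letter_without_step w by blast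
next
  case False
  then obtain x bs y where dec: "block_decomposition w x bs y"
    using block_decomposition_exists by (metis not_None_eq)
  note short = block_degs_short[OF dec no_walk]
  have "set (block_degs bs) \<subseteq> carrier G"
    using short(4) deg_set_subset_carrier by blast
  then have "mlmon (block_degs bs) \<in> graded_ids G (Bcomp :: 'g \<Rightarrow> ('f, 'n) sqmat set)"
    using short(1,2) by (intro mlmon_mem_graded_ids) auto
  then have "mlmon (block_degs bs) \<in> J"
    using short short_monomial_identities_in_J by (auto simp: short_monomial_identities_def)
  moreover have w_split: "w = x @ concat bs @ y" and "\<forall>b\<in>set bs. b \<noteq> []"
    using dec by (simp_all add: block_decomposition_def)
  ultimately have "mon (concat bs) \<in> J"
    using w(2) by (intro mon_concat_in_J) auto
  from mon_context_in_J[OF this, of x y] w(2) w_split show ?thesis by auto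
qed

end

section \<open>Algebraic independence of commutative monomials\<close>

lemma coeffs_zero_if_poly_vanishes:
  fixes a :: "nat \<Rightarrow> 'f::field"
  assumes inf: "infinite (UNIV :: 'f set)" and K: "finite K"
    and vanish: "\<And>s. (\<Sum>k\<in>K. a k * s ^ k) = 0"
  shows "\<forall>k\<in>K. a k = 0"
proof
  define p where "p = (\<Sum>k\<in>K. monom (a k) k)"
  have "poly p s = 0" for s using vanish by (simp add: p_def poly_sum poly_monom)
  then have "{s. poly p s = 0} = UNIV" by blast
  then have "p = 0" using inf poly_roots_finite[of p] by auto
  fix k assume "k \<in> K"
  then have "coeff p k = a k" using K by (simp add: p_def coeff_sum coeff_monom)
  then show "a k = 0" using \<open>p = 0\<close> by simp
qed

lemma prod_mset_split_count:
  "(\<Prod>x\<in>#M. (t x :: 'f::comm_monoid_mult)) =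
    t x0 ^ count M x0 * (\<Prod>x\<in>#filter_mset (\<lambda>y. y \<noteq> x0) M. t x)"
  by (induction M) (auto simp: mult_ac)

text \<open>Specialising the variable x0 to a scalar s turns the vanishing sum into a polynomial in s
  whose coefficients are the sums over the monomials of a fixed degree in x0.\<close>

lemma monomials_of_degree_in_var_vanish:
  fixes c :: "'x multiset \<Rightarrow> 'f::field"
  assumes inf: "infinite (UNIV :: 'f set)" and Ms: "finite Ms"
    and vanish: "\<And>t. (\<Sum>M\<in>Ms. c M * (\<Prod>x\<in>#M. t x)) = 0"
  shows "(\<Sum>M\<in>{M\<in>Ms. count M x0 = j}. c M * (\<Prod>x\<in>#filter_mset (\<lambda>y. y \<noteq> x0) M. t x)) = 0"
proof -
  let ?k = "\<lambda>M. count M x0" and ?r = "\<lambda>M. filter_mset (\<lambda>y. y \<noteq> x0) M"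
  define C where "C = (\<lambda>j. \<Sum>M\<in>{M\<in>Ms. ?k M = j}. c M * (\<Prod>x\<in>#?r M. t x))"
  have "(\<Sum>j\<in>?k ` Ms. C j * s ^ j) = 0" for s
  proof -
    have rest: "(\<Prod>x\<in>#?r M. (t(x0 := s)) x) = (\<Prod>x\<in>#?r M. t x)" for M
      by (rule arg_cong[where f = prod_mset], rule image_mset_cong) auto
    have "0 = (\<Sum>M\<in>Ms. c M * (\<Prod>x\<in>#M. (t(x0 := s)) x))"
      using vanish by simp
    also have "\<dots> = (\<Sum>M\<in>Ms. c M * (s ^ ?k M * (\<Prod>x\<in>#?r M. t x)))"
    proof (intro sum.cong refl)
      fix M
      show "c M * (\<Prod>x\<in>#M. (t(x0 := s)) x) = c M * (s ^ ?k M * (\<Prod>x\<in>#?r M. t x))"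
        using prod_mset_split_count[of "t(x0 := s)" M x0] rest[of M] by simp
    qed
    also have "\<dots> = (\<Sum>j\<in>?k ` Ms. \<Sum>M\<in>{M\<in>Ms. ?k M = j}. c M * (s ^ ?k M * (\<Prod>x\<in>#?r M. t x)))"
      by (rule sum.group[symmetric]) (use Ms in auto)
    also have "\<dots> = (\<Sum>j\<in>?k ` Ms. C j * s ^ j)"
      unfolding C_def sum_distrib_right
      by (intro sum.cong refl) (auto simp: mult_ac)
    finally show ?thesis by simp
  qed
  then have "\<forall>j\<in>?k ` Ms. C j = 0"
    using Ms by (intro coeffs_zero_if_poly_vanishes[OF inf]) auto
  moreover have "C j = 0" if "j \<notin> ?k ` Ms"
    using that by (auto simp: C_def intro!: sum.neutral)
  ultimately show ?thesis by (cases "j \<in> ?k ` Ms") (auto simp: C_def)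
qed

lemma multiset_monomials_independent_on:
  fixes c :: "'x multiset \<Rightarrow> 'f::field"
  assumes inf: "infinite (UNIV :: 'f set)" and X: "finite X"
  shows "finite Ms \<Longrightarrow> \<forall>M\<in>Ms. set_mset M \<subseteq> X \<Longrightarrow>
    (\<forall>t. (\<Sum>M\<in>Ms. c M * (\<Prod>x\<in>#M. t x)) = 0) \<Longrightarrow> \<forall>M\<in>Ms. c M = 0"
  using X
proof (induction X arbitrary: Ms c rule: finite_induct)
  case empty
  show ?case
  proof
    fix M assume "M \<in> Ms"
    with empty.prems(2) have "Ms = {{#}}" "M = {#}" by auto
    with empty.prems(3) show "c M = 0" by auto
  qed
next
  case (insert x0 X)
  let ?k = "\<lambda>M. count M x0" and ?r = "\<lambda>M. filter_mset (\<lambda>y. y \<noteq> x0) M"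
  show ?case
  proof
    fix M0 assume M0: "M0 \<in> Ms"
    define j where "j = ?k M0"
    define Ms' where "Ms' = {M\<in>Ms. ?k M = j}"
    have recon: "M = ?r M + replicate_mset j x0" if "M \<in> Ms'" for M
      using that by (intro multiset_eqI) (auto simp: count_replicate_mset Ms'_def)
    have inj: "inj_on ?r Ms'"
      by (rule inj_onI) (metis recon)
    have "\<forall>N\<in>?r ` Ms'. c (N + replicate_mset j x0) = 0"
    proof (rule insert.IH)
      show "finite (?r ` Ms')" using insert.prems(1) by (simp add: Ms'_def)
      show "\<forall>N\<in>?r ` Ms'. set_mset N \<subseteq> X"
        using insert.prems(2) by (auto simp: Ms'_def)
      show "\<forall>t. (\<Sum>N\<in>?r ` Ms'. c (N + replicate_mset j x0) * (\<Prod>x\<in>#N. t x)) = 0"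
      proof
        fix t
        have "(\<Sum>N\<in>?r ` Ms'. c (N + replicate_mset j x0) * (\<Prod>x\<in>#N. t x)) =
            (\<Sum>M\<in>Ms'. c M * (\<Prod>x\<in>#?r M. t x))"
          by (simp add: sum.reindex[OF inj] recon[symmetric] cong: sum.cong)
        also have "\<dots> = 0"
          unfolding Ms'_def using insert.prems
          by (intro monomials_of_degree_in_var_vanish[OF inf]) auto
        finally show "(\<Sum>N\<in>?r ` Ms'. c (N + replicate_mset j x0) * (\<Prod>x\<in>#N. t x)) = 0" .
      qed
    qed
    moreover have "M0 \<in> Ms'" using M0 by (simp add: Ms'_def j_def)
    ultimately show "c M0 = 0" using recon by fastforce
  qed
qed

lemma multiset_monomials_independent:
  fixes c :: "'x multiset \<Rightarrow> 'f::field"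
  assumes "infinite (UNIV :: 'f set)" "finite Ms"
    and "\<And>t. (\<Sum>M\<in>Ms. c M * (\<Prod>x\<in>#M. t x)) = 0"
  shows "\<forall>M\<in>Ms. c M = 0"
  by (rule multiset_monomials_independent_on[OF assms(1) _ assms(2), of "\<Union>M\<in>Ms. set_mset M"])
    (use assms in auto)

section \<open>Graded identities are sums of differences of words with the same walk\<close>

definition prestrict :: "('g, 'f::field) gpoly \<Rightarrow> ('g \<times> nat) list set \<Rightarrow> ('g, 'f) gpoly" where
  "prestrict p K = (\<lambda>u. if u \<in> K then p u else 0)"

lemma prestrict_eq_sum_psub_mon:
  assumes "finite K" "(\<Sum>v\<in>K. p v) = 0"
  shows "prestrict p K = (\<lambda>u. \<Sum>v\<in>K. psmult (p v) (psub (mon v) (mon w)) u)"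
proof
  fix u
  have "(\<Sum>v\<in>K. psmult (p v) (psub (mon v) (mon w)) u) =
      (\<Sum>v\<in>K. if u = v then p v else 0) - (\<Sum>v\<in>K. p v) * mon w u"
    by (simp add: psmult_def psub_def mon_apply algebra_simps sum_subtractf sum_distrib_right
        if_distrib[of "(*) _"] cong: if_cong)
  then show "prestrict p K u = (\<Sum>v\<in>K. psmult (p v) (psub (mon v) (mon w)) u)"
    using assms by (simp add: prestrict_def)
qed

context elementary_unit_span
begin

text \<open>Evaluating at generic matrices, one independent variable for each labelled edge, turns the
  (a, b)-entries of a graded identity, summed over b, into a polynomial in these variables whose
  monomials are the edge multisets of the walks from a.\<close>

lemma graded_identity_generic_eval:
  assumes p: "p \<in> graded_ids G (Bcomp :: 'g \<Rightarrow> ('f::field, 'n) sqmat set)"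
  shows "(\<Sum>w\<in>{w\<in>supp p. word_end a w \<noteq> None}. p w * (\<Prod>x\<in>#walk_edges a w. t x)) = (0 :: 'f)"
proof -
  define \<sigma> :: "'g \<times> nat \<Rightarrow> ('f, 'n) sqmat" where
    "\<sigma> = (\<lambda>l i j. if step i (fst l) = Some j then t (l, i, j) else 0)"
  have \<sigma>: "graded_assignment \<sigma>"
    by (auto simp: \<sigma>_def graded_assignment_def mem_Bcomp_iff)
  have gp: "is_gpoly G p" using p by (simp add: mem_graded_ids_iff)
  have row: "(\<Sum>j\<in>UNIV. mprod (map \<sigma> w) a j) =
      (if word_end a w \<noteq> None then \<Prod>x\<in>#walk_edges a w. t x else 0)" if "w \<in> supp p" for w
  proof (cases "word_end a w")
    case (Some e)
    have letters: "\<forall>v\<in>set w. fst v \<in> carrier G" using gp that by (auto simp: is_gpoly_def)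
    have "(\<Sum>j\<in>UNIV. mprod (map \<sigma> w) a j) = mprod (map \<sigma> w) a e"
      by (rule sum_UNIV_eq_single) (simp add: mprod_graded_assignment[OF \<sigma> letters] Some)
    also have "\<dots> = walk_weight \<sigma> a w"
      by (simp add: mprod_graded_assignment[OF \<sigma> letters] Some)
    also have "\<dots> = (\<Prod>x\<in>#walk_edges a w. t x)"
      unfolding walk_weight_eq_prod_edges[OF Some[THEN option.discI]]
      by (intro arg_cong[where f = prod_mset] image_mset_cong)
        (auto simp: \<sigma>_def dest: walk_edges_split)
    finally show ?thesis using Some by simp
  next
    case None
    moreover have "\<forall>v\<in>set w. fst v \<in> carrier G" using gp that by (auto simp: is_gpoly_def)
    ultimately show ?thesis by (simp add: mprod_graded_assignment[OF \<sigma>])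
  qed
  have "0 = (\<Sum>j\<in>UNIV. peval \<sigma> p a j)"
    using p \<sigma> by (simp add: mem_graded_ids_iff mzero_def)
  also have "\<dots> = (\<Sum>w\<in>supp p. p w * (\<Sum>j\<in>UNIV. mprod (map \<sigma> w) a j))"
    unfolding peval_def by (subst sum.swap) (simp add: sum_distrib_left)
  also have "\<dots> = (\<Sum>w\<in>supp p. if word_end a w \<noteq> None then p w * (\<Prod>x\<in>#walk_edges a w. t x) else 0)"
    by (intro sum.cong refl) (simp add: row)
  also have "\<dots> = (\<Sum>w\<in>{w\<in>supp p. word_end a w \<noteq> None}. p w * (\<Prod>x\<in>#walk_edges a w. t x))"
    using gp by (simp add: sum.inter_filter is_gpoly_def)
  finally show ?thesis by simp
qed

definition walk_class :: "('g, 'f::field) gpoly \<Rightarrow> 'n \<Rightarrow> ('g \<times> nat) list \<Rightarrow> ('g \<times> nat) list set" where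
  "walk_class p a w = {v\<in>supp p. word_end a v \<noteq> None \<and> walk_edges a v = walk_edges a w}"

lemma walk_class_coeff_sum_zero:
  assumes inf: "infinite (UNIV :: 'f::field set)"
    and p: "p \<in> graded_ids G (Bcomp :: 'g \<Rightarrow> ('f, 'n) sqmat set)"
    and w: "w \<in> supp p" "word_end a w \<noteq> None"
  shows "(\<Sum>v\<in>walk_class p a w. p v) = 0"
proof -
  define W where "W = {w\<in>supp p. word_end a w \<noteq> None}"
  have W: "finite W" using p by (simp add: W_def mem_graded_ids_iff is_gpoly_def)
  define c where "c = (\<lambda>M. \<Sum>v\<in>{v\<in>W. walk_edges a v = M}. p v)"
  have "\<forall>M\<in>walk_edges a ` W. c M = 0"
  proof (rule multiset_monomials_independent[OF inf])
    fix t :: "('g \<times> nat) \<times> 'n \<times> 'n \<Rightarrow> 'f"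
    have "(\<Sum>M\<in>walk_edges a ` W. c M * (\<Prod>x\<in>#M. t x)) = (\<Sum>v\<in>W. p v * (\<Prod>x\<in>#walk_edges a v. t x))"
      unfolding c_def sum_distrib_right using W
      by (subst sum.group[symmetric, where g = "walk_edges a"]) (auto intro!: sum.cong)
    then show "(\<Sum>M\<in>walk_edges a ` W. c M * (\<Prod>x\<in>#M. t x)) = 0"
      using graded_identity_generic_eval[OF p] by (simp add: W_def)
  qed (use W in simp)
  moreover have "walk_edges a w \<in> walk_edges a ` W" using w by (simp add: W_def)
  ultimately have "c (walk_edges a w) = 0" by blast
  moreover have "{v\<in>W. walk_edges a v = walk_edges a w} = walk_class p a w"
    by (auto simp: W_def walk_class_def)
  ultimately show ?thesis by (simp add: c_def)
qed

definition word_class :: "('g, 'f::field) gpoly \<Rightarrow> ('g \<times> nat) list \<Rightarrow> ('g \<times> nat) list set" where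
  "word_class p w = (if \<exists>a. word_end a w \<noteq> None
    then walk_class p (SOME a. word_end a w \<noteq> None) w else {w})"

lemma word_class_subset:
  assumes "w \<in> supp p"
  shows "w \<in> word_class p w" "word_class p w \<subseteq> supp p"
proof -
  show "w \<in> word_class p w"
  proof (cases "\<exists>a. word_end a w \<noteq> None")
    case True
    then have "word_end (SOME a. word_end a w \<noteq> None) w \<noteq> None" by (rule someI_ex)
    with assms True show ?thesis by (simp add: word_class_def walk_class_def)
  qed (simp add: word_class_def)
  show "word_class p w \<subseteq> supp p"
    using assms by (auto simp: word_class_def walk_class_def)
qed

end

context basis_ideal
begin

lemma prestrict_word_class_in_J:
  assumes inf: "infinite (UNIV :: 'f set)"
    and p: "p \<in> graded_ids G (Bcomp :: 'g \<Rightarrow> ('f, 'n) sqmat set)" and w: "w \<in> supp p"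
  shows "prestrict p (word_class p w) \<in> J"
proof -
  have gp: "is_gpoly G p" using p by (simp add: mem_graded_ids_iff)
  then have ne: "w \<noteq> []" and letters: "\<forall>v\<in>set w. fst v \<in> carrier G"
    using w by (auto simp: is_gpoly_def supp_def)
  show ?thesis
  proof (cases "\<exists>a. word_end a w \<noteq> None")
    case True
    define a where "a = (SOME a. word_end a w \<noteq> None)"
    have a: "word_end a w \<noteq> None" unfolding a_def using True by (rule someI_ex)
    define K where "K = walk_class p a w"
    have K: "finite K" "\<And>v. v \<in> K \<Longrightarrow> word_end a v \<noteq> None \<and> walk_edges a v = walk_edges a w \<and> v \<noteq> []"
      using gp by (auto simp: K_def walk_class_def is_gpoly_def supp_def)
    have "prestrict p K = (\<lambda>u. \<Sum>v\<in>K. psmult (p v) (psub (mon v) (mon w)) u)"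
      by (rule prestrict_eq_sum_psub_mon[OF K(1)])
        (use walk_class_coeff_sum_zero[OF inf p w a] in \<open>simp add: K_def\<close>)
    also have "\<dots> \<in> J"
    proof (rule sum_in_J[OF K(1)])
      fix v assume "v \<in> K"
      then show "psmult (p v) (psub (mon v) (mon w)) \<in> J"
        using K(2) a by (intro psmult_in_J psub_mon_in_J_if_same_walk_edges) auto
    qed
    finally show ?thesis using True by (simp add: word_class_def K_def a_def)
  next
    case False
    then have "mon w \<in> J"
      using ne letters by (intro mon_in_J_if_no_walk) auto
    then have "psmult (p w) (mon w) \<in> J" by (rule psmult_in_J)
    moreover have "prestrict p {w} = psmult (p w) (mon w)"
      by (auto simp: prestrict_def psmult_def mon_apply)
    ultimately show ?thesis using False by (simp add: word_class_def)
  qed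
qed

end

context elementary_unit_span
begin

text \<open>Induction on the size of the support: the part of a graded identity supported on the class
  of one of its words lies in J (by the previous lemma, applied to J and to the T_G-ideal of all
  graded identities), and what remains is a graded identity with smaller support.\<close>

lemma graded_ids_subset_basis_ideal:
  assumes inf: "infinite (UNIV :: 'f::field set)"
    and J: "basis_ideal G gs S (J :: ('g, 'f) gpoly set)"
  shows "graded_ids G (Bcomp :: 'g \<Rightarrow> ('f, 'n) sqmat set) \<subseteq> J"
proof
  interpret J: basis_ideal G gs S J by (rule J)
  interpret Ids: basis_ideal G gs S "graded_ids G (Bcomp :: 'g \<Rightarrow> ('f, 'n) sqmat set)"
    by (intro basis_ideal.intro[OF elementary_unit_span_axioms] basis_ideal_axioms.intro
        TG_ideal_graded_ids basic_identities_subset_graded_ids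
        short_monomial_identities_subset_graded_ids)
  fix p assume "p \<in> graded_ids G (Bcomp :: 'g \<Rightarrow> ('f, 'n) sqmat set)"
  then show "p \<in> J"
  proof (induction "card (supp p)" arbitrary: p rule: less_induct)
    case less
    show ?case
    proof (cases "supp p = {}")
      case True
      then have "p = pzero" by (auto simp: supp_def pzero_def)
      then show ?thesis using J.pzero_in_J by simp
    next
      case False
      then obtain w where w: "w \<in> supp p" by blast
      let ?r = "prestrict p (word_class p w)"
      have fin: "finite (supp p)" using less.prems by (simp add: mem_graded_ids_iff is_gpoly_def)
      have "supp (psub p ?r) = supp p - word_class p w"
        by (auto simp: supp_def psub_def prestrict_def)
      then have "supp (psub p ?r) \<subset> supp p"
        using word_class_subset[OF w] w by blast
      then have "card (supp (psub p ?r)) < card (supp p)"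
        by (rule psubset_card_mono[OF fin])
      moreover have "psub p ?r \<in> graded_ids G (Bcomp :: 'g \<Rightarrow> ('f, 'n) sqmat set)"
        using less.prems Ids.prestrict_word_class_in_J[OF inf less.prems w] by (rule Ids.psub_in_J)
      ultimately have "psub p ?r \<in> J" using less.hyps by blast
      then have "padd (psub p ?r) ?r \<in> J"
        using J.prestrict_word_class_in_J[OF inf less.prems w] by (rule J.padd_in_J)
      moreover have "padd (psub p ?r) ?r = p" by (simp add: padd_def psub_def)
      ultimately show ?thesis by simp
    qed
  qed
qed

theorem graded_ids_eq_TG_generated:
  assumes inf: "infinite (UNIV :: 'f::field set)"
  shows "graded_ids G (Bcomp :: 'g \<Rightarrow> ('f, 'n) sqmat set) =
    TG_generated G (basic_identities \<union> short_monomial_identities)"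
    (is "?Ids = TG_generated G ?Basis")
proof
  have "?Ids \<subseteq> J" if "TG_ideal G J" "?Basis \<subseteq> J" for J
    using that by (intro graded_ids_subset_basis_ideal[OF inf]
        basis_ideal.intro[OF elementary_unit_span_axioms] basis_ideal_axioms.intro) auto
  then show "?Ids \<subseteq> TG_generated G ?Basis"
    unfolding TG_generated_def by blast
  show "TG_generated G ?Basis \<subseteq> ?Ids"
    unfolding TG_generated_def
    by (intro Inter_lower CollectI conjI TG_ideal_graded_ids Un_least
        basic_identities_subset_graded_ids short_monomial_identities_subset_graded_ids)
qed

end

theorem mainTheorem1:
  fixes G :: "('g, 'b) monoid_scheme"
    and gs :: "'n::finite \<Rightarrow> 'g"
    and S :: "('n \<times> 'n) set"
    and B :: "('f::field, 'n) sqmat set"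
  assumes "infinite (UNIV :: 'f set)"
    and "group G"
    and "\<And>i. gs i \<in> carrier G"
    and "inj gs"
    and "B = unit_span S"
    and "is_subalgebra B"
  shows "\<exists>H. finite H \<and>
      (\<forall>hs\<in>H. 2 \<le> length hs \<and> length hs \<le> 2 * card (UNIV :: 'n set) - 1 \<and> set hs \<subseteq> carrier G \<and>
               mlmon hs \<in> graded_ids G (\<lambda>h. B \<inter> elem_comp G gs h)) \<and>
      graded_ids G (\<lambda>h. B \<inter> elem_comp G gs h) =
        TG_generated G
          ((if B \<inter> elem_comp G gs \<one>\<^bsub>G\<^esub> \<noteq> {mzero}
             then {psub (mon [(\<one>\<^bsub>G\<^esub>, 1), (\<one>\<^bsub>G\<^esub>, 2)]) (mon [(\<one>\<^bsub>G\<^esub>, 2), (\<one>\<^bsub>G\<^esub>, 1)])}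
             else {})
           \<union> {psub (mon [(h, 1), (inv\<^bsub>G\<^esub> h, 2), (h, 3)]) (mon [(h, 3), (inv\<^bsub>G\<^esub> h, 2), (h, 1)])
             | h. h \<in> carrier G \<and> h \<noteq> \<one>\<^bsub>G\<^esub> \<and> B \<inter> elem_comp G gs h \<noteq> {mzero}}
           \<union> {mon [(h, 1)] | h. h \<in> carrier G \<and> B \<inter> elem_comp G gs h = {mzero}}
           \<union> mlmon ` H)"
proof -
  interpret elementary_unit_span G gs S
    using assms(2-6) unit_span_subalgebra_trans[of S]
    by (intro elementary_unit_span.intro elementary_unit_span_axioms.intro) auto
  have B: "B \<inter> elem_comp G gs h = Bcomp h" for h
    using assms(5) by (simp add: Bcomp_def)
  define H where "H = {hs. set hs \<subseteq> deg_set \<and> 2 \<le> length hs \<and>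
    length hs \<le> 2 * card (UNIV :: 'n set) - 1 \<and>
    mlmon hs \<in> graded_ids G (Bcomp :: 'g \<Rightarrow> ('f, 'n) sqmat set)}"
  have "finite H"
    by (rule finite_subset[OF _ finite_lists_length_le[OF finite_deg_set]]) (auto simp: H_def)
  moreover have "mlmon ` H = (short_monomial_identities :: ('g, 'f) gpoly set)"
    by (auto simp: H_def short_monomial_identities_def)
  ultimately show ?thesis
    using graded_ids_eq_TG_generated[OF assms(1)] deg_set_subset_carrier
    by (intro exI[of _ H]) (auto simp: B basic_identities_def H_def)
qed

end
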